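(* Consider the $T$-stage repeated Bayesian game $\Gamma_T(p,q)$ (setting below). Then $$V_T(p,q)=\max \sum_{l\in L} q^l u_{l,0}$$ where the maximum is over $x\in X_T(p)$, real numbers $u_{l,0}$ ($l\in L$), and real $|A|\times|B|$ matrices $u_{l,h^A,h^B}$ for $l\in L$, $s=1,\dots,T-1$, $h^A\in A^{s-1}$, $h^B\in B^{s-1}$ (with the convention $u_{l,h^A,h^B}=0$ for $h^A\in A^{T-1},h^B\in B^{T-1}$), subject to $$\sum_{k\in K}(M^{kl})^T x_{k,\emptyset,\emptyset}+(u_{l,\emptyset,\emptyset})^T\mathbf 1\ \ge\ u_{l,0}\mathbf 1\quad \forall l\in L,$$ $$\sum_{k\in K}(M^{kl})^T x_{k,(h^A,a),(h^B,b)}+(u_{l,(h^A,a),(h^B,b)})^T\mathbf 1\ \ge\ u^{a,b}_{l,h^A,h^B}\mathbf 1$$ for all $s=1,\dots,T-1$, $l\in L$, $h^A\in A^{s-1}$, $h^B\in B^{s-1}$, $a\in A$, $b\in B$. Moreover, if $x^*$ is the $x$-part of an optimal solution, then the behavior strategy $\sigma^*$ defined by $\sigma_t^{a*}(k,h^A,h^B)=x^{a*}_{k,h^A,h^B}/x^{a'*}_{k,h'^A,h'^B}$, where $h^A=(h'^A,a')$, $h^B=(h'^B,b')$ (and the denominator is $p^k$ when $t=1$), is a security strategy of player 1 in $\Gamma_T(p,q)$. Dually, $$V_T(p,q)=\min \sum_{k\in K} p^k w_{k,0}$$ over $y\in Y_T(q)$, reals $w_{k,0}$ ($k\in K$), and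 real $|A|\times|B|$ matrices $w_{k,h^A,h^B}$ for $k\in K$, $s=1,\dots,T-1$, $h^A\in A^{s-1}$, $h^B\in B^{s-1}$ (with $w_{k,h^A,h^B}=0$ for histories of length $T-1$), subject to $$\sum_{l\in L}M^{kl}y_{l,\emptyset,\emptyset}+w_{k,\emptyset,\emptyset}\mathbf 1\le w_{k,0}\mathbf 1\quad\forall k\in K,$$ $$\sum_{l\in L}M^{kl}y_{l,(h^A,a),(h^B,b)}+w_{k,(h^A,a),(h^B,b)}\mathbf 1\le w^{a,b}_{k,h^A,h^B}\mathbf 1$$ for all $s=1,\dots,T-1$, $k\in K$, $h^A\in A^{s-1}$, $h^B\in B^{s-1}$, $a\in A$, $b\in B$; and if $y^*$ is the $y$-part of an optimal solution, the behavior strategy $\tau^*$ with $\tau_t^{b*}(l,h^A,h^B)=y^{b*}_{l,h^A,h^B}/y^{b'*}_{l,h'^A,h'^B}$ (where $h^A=(h'^A,a')$, $h^B=(h'^B,b')$, denominator $q^l$ when $t=1$) is a security strategy of player 2 in $\Gamma_T(p,q)$.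
   Context: A two-player zero-sum repeated Bayesian game is given by nonempty finite type sets $K$ (player 1) and $L$ (player 2), nonempty finite action sets $A$, $B$, a payoff function $M:K\times L\times A\times B\to\mathbb R$ (write $M^{kl}$ for the $|A|\times|B|$ matrix with entries $M^{kl}_{a,b}=M(k,l,a,b)$), and $p\in\Delta(K)$, $q\in\Delta(L)$ with all entries positive ($\Delta(S)$ = probability distributions on $S$, viewed as vectors; $\mathbf 1$ = all-ones vector). Types $k\sim p$, $l\sim q$ are drawn independently; player 1 privately learns $k$, player 2 privately learns $l$. At each stage $t$ both simultaneously choose $a_t\in A$, $b_t\in B$, which are publicly announced; $h_t^A=(a_1,\dots,a_{t-1})\in A^{t-1}$, $h_t^B=(b_1,\dots,b_{t-1})\in B^{t-1}$ (empty, written $\emptyset$, for $t=1$). A behavior strategy of player 1 is $\sigma=(\sigma_t)$ with $\sigma_t:K\times A^{t-1}\times B^{t-1}\to\Delta(A)$ ($\sigma_t^a$ = probability of $a$); of player 2, $\tau_t:L\times A^{t-1}\times B^{t-1}\to\Delta(B)$. In the $T$-stage game $\Gamma_T(p,q)$ the payoff to player 1 (maximizer; player 2 minimizes) is $\gamma_T(p,q,\sigma,\tau)=\mathbb E_{p,q,\sigma,\tau}[\sum_{t=1}^T M(k,l,a_t,b_t)]$; its value is $V_T(p,q)=\max_\sigma\min_\tau\gamma_T=\min_\tau\max_\sigma\gamma_T$. A security strategy of player 1 (resp. 2) is one attaining $\max_\sigma\min_\tau\gamma_T$ (resp. $\min_\tau\max_\sigma\gamma_T$). Realization plans: $X_T(p)$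 is the set of families $x=(x_{k,h^A,h^B})$, $k\in K$, $t=1,\dots,T$, $h^A\in A^{t-1}$, $h^B\in B^{t-1}$, with $x_{k,h^A,h^B}\in\mathbb R^{|A|}$ (entries $x^a_{k,h^A,h^B}$), such that $x\ge 0$, $\mathbf 1^Tx_{k,\emptyset,\emptyset}=p^k$ and $\mathbf 1^Tx_{k,(h^A,a),(h^B,b)}=x^a_{k,h^A,h^B}$ for all $t\le T-1$, $h^A\in A^{t-1},h^B\in B^{t-1}$, $a\in A$, $b\in B$ ($(h,a)$ = concatenation). The realization plan of $\sigma$ is $x^{a_t}_{k,h_t^A,h_t^B}=p^k\prod_{s=1}^t\sigma_s^{a_s}(k,h_s^A,h_s^B)$, with $h_s^A,h_s^B$ the prefixes of $h_t^A,h_t^B$. $Y_T(q)$ is defined symmetrically with $L$, $B$, $q$, vectors $y_{l,h^A,h^B}\in\mathbb R^{|B|}$ and constraints $\mathbf 1^Ty_{l,\emptyset,\emptyset}=q^l$, $\mathbf 1^Ty_{l,(h^A,a),(h^B,b)}=y^b_{l,h^A,h^B}$, $y\ge0$. *)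

theory Defs
  imports Complex_Main
begin

text \<open>Repeated zero-sum Bayesian game with types 'k (player 1), 'l (player 2) and actions
 'a (player 1), 'b (player 2), all finite (and nonempty, as every HOL type).
 Histories h^A, h^B are lists of actions; at stage t they have length t - 1.
 A behaviour strategy of player 1 is sigma t k hA hB a (probability of a at stage t).\<close>

definition is_distr :: "('x::finite \<Rightarrow> real) \<Rightarrow> bool" where
  "is_distr p \<longleftrightarrow> (\<forall>x. p x \<ge> 0) \<and> sum p UNIV = 1"

definition behav1 :: "nat \<Rightarrow> (nat \<Rightarrow> 'k \<Rightarrow> 'a list \<Rightarrow> 'b list \<Rightarrow> 'a::finite \<Rightarrow> real) set" where
  "behav1 T = {\<sigma>. \<forall>t\<in>{1..T}. \<forall>k hA hB. length hA = t - 1 \<and> length hB = t - 1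
       \<longrightarrow> is_distr (\<sigma> t k hA hB)}"

definition behav2 :: "nat \<Rightarrow> (nat \<Rightarrow> 'l \<Rightarrow> 'a list \<Rightarrow> 'b list \<Rightarrow> 'b::finite \<Rightarrow> real) set" where
  "behav2 T = {\<tau>. \<forall>t\<in>{1..T}. \<forall>l hA hB. length hA = t - 1 \<and> length hB = t - 1
       \<longrightarrow> is_distr (\<tau> t l hA hB)}"

definition gamma ::
  "nat \<Rightarrow> ('k::finite \<Rightarrow> real) \<Rightarrow> ('l::finite \<Rightarrow> real) \<Rightarrow> ('k \<Rightarrow> 'l \<Rightarrow> 'a::finite \<Rightarrow> 'b::finite \<Rightarrow> real)
   \<Rightarrow> (nat \<Rightarrow> 'k \<Rightarrow> 'a list \<Rightarrow> 'b list \<Rightarrow> 'a \<Rightarrow> real)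
   \<Rightarrow> (nat \<Rightarrow> 'l \<Rightarrow> 'a list \<Rightarrow> 'b list \<Rightarrow> 'b \<Rightarrow> real) \<Rightarrow> real" where
  "gamma T p q M \<sigma> \<tau> =
    (\<Sum>k\<in>UNIV. \<Sum>l\<in>UNIV. \<Sum>hA\<in>{h. length h = T}. \<Sum>hB\<in>{h. length h = T}.
       p k * q l *
       (\<Prod>s<T. \<sigma> (Suc s) k (take s hA) (take s hB) (hA ! s)
               * \<tau> (Suc s) l (take s hA) (take s hB) (hB ! s)) *
       (\<Sum>s<T. M k l (hA ! s) (hB ! s)))"

definition val_maxmin where
  "val_maxmin T p q M = (SUP \<sigma>\<in>behav1 T. INF \<tau>\<in>behav2 T. gamma T p q M \<sigma> \<tau>)"

definition val_minmax where
  "val_minmax T p q M = (INF \<tau>\<in>behav2 T. SUP \<sigma>\<in>behav1 T. gamma T p q M \<sigma> \<tau>)"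

definition security1 where
  "security1 T p q M \<sigma> \<longleftrightarrow> \<sigma> \<in> behav1 T \<and>
     (INF \<tau>\<in>behav2 T. gamma T p q M \<sigma> \<tau>) = val_maxmin T p q M"

definition security2 where
  "security2 T p q M \<tau> \<longleftrightarrow> \<tau> \<in> behav2 T \<and>
     (SUP \<sigma>\<in>behav1 T. gamma T p q M \<sigma> \<tau>) = val_minmax T p q M"

definition realX :: "nat \<Rightarrow> ('k \<Rightarrow> real) \<Rightarrow> ('k \<Rightarrow> 'a list \<Rightarrow> 'b list \<Rightarrow> 'a::finite \<Rightarrow> real) \<Rightarrow> bool" where
  "realX T p x \<longleftrightarrow>
     (\<forall>k hA hB a. length hA = length hB \<and> length hA < T \<longrightarrow> x k hA hB a \<ge> 0) \<and>
     (\<forall>k. sum (x k [] []) UNIV = p k) \<and>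
     (\<forall>k hA hB a b. length hA = length hB \<and> length hA + 1 < T \<longrightarrow>
        sum (x k (hA @ [a]) (hB @ [b])) UNIV = x k hA hB a)"

definition realY :: "nat \<Rightarrow> ('l \<Rightarrow> real) \<Rightarrow> ('l \<Rightarrow> 'a list \<Rightarrow> 'b list \<Rightarrow> 'b::finite \<Rightarrow> real) \<Rightarrow> bool" where
  "realY T q y \<longleftrightarrow>
     (\<forall>l hA hB b. length hA = length hB \<and> length hA < T \<longrightarrow> y l hA hB b \<ge> 0) \<and>
     (\<forall>l. sum (y l [] []) UNIV = q l) \<and>
     (\<forall>l hA hB a b. length hA = length hB \<and> length hA + 1 < T \<longrightarrow>
        sum (y l (hA @ [a]) (hB @ [b])) UNIV = y l hA hB b)"

definition conv0 :: "nat \<Rightarrow> ('i \<Rightarrow> 'a list \<Rightarrow> 'b list \<Rightarrow> 'a \<Rightarrow> 'b \<Rightarrow> real)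
   \<Rightarrow> 'i \<Rightarrow> 'a list \<Rightarrow> 'b list \<Rightarrow> 'a \<Rightarrow> 'b \<Rightarrow> real" where
  "conv0 T u i hA hB = (if length hA = T - 1 then (\<lambda>a b. 0) else u i hA hB)"

definition lp1_feasible ::
  "nat \<Rightarrow> ('k::finite \<Rightarrow> real) \<Rightarrow> ('k \<Rightarrow> 'l \<Rightarrow> 'a::finite \<Rightarrow> 'b::finite \<Rightarrow> real)
   \<Rightarrow> ('k \<Rightarrow> 'a list \<Rightarrow> 'b list \<Rightarrow> 'a \<Rightarrow> real) \<Rightarrow> ('l \<Rightarrow> real)
   \<Rightarrow> ('l \<Rightarrow> 'a list \<Rightarrow> 'b list \<Rightarrow> 'a \<Rightarrow> 'b \<Rightarrow> real) \<Rightarrow> bool" where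
  "lp1_feasible T p M x u0 u \<longleftrightarrow> realX T p x \<and>
     (\<forall>l b'. (\<Sum>k\<in>UNIV. \<Sum>a'\<in>UNIV. M k l a' b' * x k [] [] a')
              + (\<Sum>a'\<in>UNIV. conv0 T u l [] [] a' b') \<ge> u0 l) \<and>
     (\<forall>l hA hB a b b'. length hA = length hB \<and> length hA + 1 < T \<longrightarrow>
        (\<Sum>k\<in>UNIV. \<Sum>a'\<in>UNIV. M k l a' b' * x k (hA @ [a]) (hB @ [b]) a')
        + (\<Sum>a'\<in>UNIV. conv0 T u l (hA @ [a]) (hB @ [b]) a' b') \<ge> conv0 T u l hA hB a b)"

definition lp1_obj :: "('l::finite \<Rightarrow> real) \<Rightarrow> ('l \<Rightarrow> real) \<Rightarrow> real" where
  "lp1_obj q u0 = (\<Sum>l\<in>UNIV. q l * u0 l)"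

definition lp2_feasible ::
  "nat \<Rightarrow> ('l::finite \<Rightarrow> real) \<Rightarrow> ('k::finite \<Rightarrow> 'l \<Rightarrow> 'a::finite \<Rightarrow> 'b::finite \<Rightarrow> real)
   \<Rightarrow> ('l \<Rightarrow> 'a list \<Rightarrow> 'b list \<Rightarrow> 'b \<Rightarrow> real) \<Rightarrow> ('k \<Rightarrow> real)
   \<Rightarrow> ('k \<Rightarrow> 'a list \<Rightarrow> 'b list \<Rightarrow> 'a \<Rightarrow> 'b \<Rightarrow> real) \<Rightarrow> bool" where
  "lp2_feasible T q M y w0 w \<longleftrightarrow> realY T q y \<and>
     (\<forall>k a'. (\<Sum>l\<in>UNIV. \<Sum>b'\<in>UNIV. M k l a' b' * y l [] [] b')
              + (\<Sum>b'\<in>UNIV. conv0 T w k [] [] a' b') \<le> w0 k) \<and>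
     (\<forall>k hA hB a b a'. length hA = length hB \<and> length hA + 1 < T \<longrightarrow>
        (\<Sum>l\<in>UNIV. \<Sum>b'\<in>UNIV. M k l a' b' * y l (hA @ [a]) (hB @ [b]) b')
        + (\<Sum>b'\<in>UNIV. conv0 T w k (hA @ [a]) (hB @ [b]) a' b') \<le> conv0 T w k hA hB a b)"

definition lp2_obj :: "('k::finite \<Rightarrow> real) \<Rightarrow> ('k \<Rightarrow> real) \<Rightarrow> real" where
  "lp2_obj p w0 = (\<Sum>k\<in>UNIV. p k * w0 k)"

text \<open>A behaviour strategy induced by a realization plan x: sigma_t^a(k,hA,hB) =
 x^a_{k,hA,hB} / x^{a'}_{k,h'A,h'B} (denominator p^k at t = 1), required wherever the
 denominator is nonzero (elsewhere the ratio is undefined and sigma is arbitrary).\<close>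
definition induced1 where
  "induced1 T p x \<sigma> \<longleftrightarrow>
     (\<forall>k a. \<sigma> 1 k [] [] a = x k [] [] a / p k) \<and>
     (\<forall>k hA hB a' b' a. length hA = length hB \<and> length hA + 1 < T \<and> x k hA hB a' \<noteq> 0 \<longrightarrow>
        \<sigma> (length hA + 2) k (hA @ [a']) (hB @ [b']) a = x k (hA @ [a']) (hB @ [b']) a / x k hA hB a')"

definition induced2 where
  "induced2 T q y \<tau> \<longleftrightarrow>
     (\<forall>l b. \<tau> 1 l [] [] b = y l [] [] b / q l) \<and>
     (\<forall>l hA hB a' b' b. length hA = length hB \<and> length hA + 1 < T \<and> y l hA hB b' \<noteq> 0 \<longrightarrow>
        \<tau> (length hA + 2) l (hA @ [a']) (hB @ [b']) b = y l (hA @ [a']) (hB @ [b']) b / y l hA hB b')"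

end

(*
  In sequence form the expected payoff is bilinear in the realization plans x and y, and against
  any fixed plan some pure plan is a best reply.  Hence mixing a saddle point of the finite matrix
  game between pure plans, which exists by von Neumann's minimax theorem (derived here from Farkas'
  lemma, proved by Fourier-Motzkin elimination), gives a saddle point (x*, y*, v) of the game in
  realization plans.

  For a fixed plan x of player 1, the linear program in the multipliers u is dual to player 2's
  best-reply problem: a telescoping identity shows that the payoff against any plan y exceeds the
  objective by a nonnegative slack, and backward induction over the histories produces multipliers
  (player 2's optimal continuation values) for which the slack of a pure best reply vanishes.  Hence
  the optimum of the linear program is max_x min_y of the payoff, which is v.

  Behaviour strategies induce realization plans and vice versa (Kuhn), and the expected payoff of
  two behaviour strategies is the sequence-form payoff of their plans.  Therefore v = V_T, and the
  behaviour strategy induced by an optimal x guarantees v.  Player 2's statements follow by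
  exchanging the roles of the players and negating the payoff.
*)

theory Submission
  imports Defs "HOL-Library.Nat_Bijection"
begin

section \<open>Farkas' lemma by Fourier--Motzkin elimination\<close>

text \<open>After eliminating the variable \<open>j\<close>, the rows of a system indexed by \<open>I \<subseteq> \<nat>\<close> are indexed
  again by natural numbers: \<open>2 * i\<close> is the old row \<open>i\<close> if its coefficient at \<open>j\<close> vanishes, and
  \<open>2 * prod_encode (i, i') + 1\<close> is the combination of a row \<open>i\<close> with positive and a row \<open>i'\<close>
  with negative coefficient at \<open>j\<close> in which \<open>j\<close> cancels.\<close>

definition fm_combine :: "(nat \<Rightarrow> 'j \<Rightarrow> real) \<Rightarrow> 'j \<Rightarrow> (nat \<Rightarrow> real) \<Rightarrow> nat \<Rightarrow> real" where
  "fm_combine A j c n = (if even n then c (n div 2) else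
     (case prod_decode (n div 2) of (i, i') \<Rightarrow> - A i' j * c i + A i j * c i'))"

definition fm_rows :: "(nat \<Rightarrow> 'j \<Rightarrow> real) \<Rightarrow> 'j \<Rightarrow> nat set \<Rightarrow> nat set" where
  "fm_rows A j I = (\<lambda>i. 2 * i) ` {i\<in>I. A i j = 0}
     \<union> (\<lambda>(i, i'). 2 * prod_encode (i, i') + 1) ` ({i\<in>I. A i j > 0} \<times> {i\<in>I. A i j < 0})"

lemma fm_combine_even [simp]: "fm_combine A j c (2 * i) = c i"
  by (simp add: fm_combine_def)

lemma fm_combine_odd [simp]:
  "fm_combine A j c (Suc (2 * prod_encode (i, i'))) = - A i' j * c i + A i j * c i'"
  by (simp add: fm_combine_def)

lemma fm_combine_linear:
  "fm_combine A j (\<lambda>i. \<Sum>j'\<in>J. B i j' * z j') n = (\<Sum>j'\<in>J. fm_combine A j (\<lambda>i. B i j') n * z j')"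
  by (auto simp: fm_combine_def sum_distrib_left sum.distrib algebra_simps sum_negf sum_subtractf
      split: prod.split)

lemma finite_fm_rows: "finite I \<Longrightarrow> finite (fm_rows A j I)"
  by (simp add: fm_rows_def)

lemma sum_fm_rows:
  assumes "finite I"
  shows "(\<Sum>n\<in>fm_rows A j I. g n) = (\<Sum>i | i \<in> I \<and> A i j = 0. g (2 * i))
     + (\<Sum>(i, i')\<in>{i\<in>I. A i j > 0} \<times> {i\<in>I. A i j < 0}. g (2 * prod_encode (i, i') + 1))"
proof -
  have "inj_on (\<lambda>(i, i'). 2 * prod_encode (i, i') + 1) X" for X
    by (auto simp: inj_on_def)
  moreover have "(\<lambda>i. 2 * i) ` X \<inter> (\<lambda>(i, i'). 2 * prod_encode (i, i') + 1) ` Y = {}" for X Y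
    by auto presburger
  ultimately show ?thesis
    using assms unfolding fm_rows_def
    by (simp add: sum.union_disjoint sum.reindex inj_on_def case_prod_beta o_def)
qed

text \<open>Each row with a positive (negative) coefficient at \<open>j\<close> bounds \<open>z j\<close> from above (below), and
  the combined rows say that every lower bound lies below every upper bound.\<close>

lemma fm_solution_extend:
  assumes I: "finite I" and J: "finite J" "j \<notin> J"
    and z: "\<forall>n\<in>fm_rows A j I. (\<Sum>j'\<in>J. fm_combine A j (\<lambda>i. A i j') n * z j') \<le> fm_combine A j b n"
  shows "\<exists>z'. \<forall>i\<in>I. (\<Sum>j'\<in>insert j J. A i j' * z' j') \<le> b i"
proof -
  let ?Ip = "{i\<in>I. A i j > 0}" and ?In = "{i\<in>I. A i j < 0}"
  define s where "s i = (\<Sum>j'\<in>J. A i j' * z j')" for i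
  define U where "U i = (b i - s i) / A i j" for i
  have z_comb: "fm_combine A j s n \<le> fm_combine A j b n" if "n \<in> fm_rows A j I" for n
    using z that by (simp add: s_def[abs_def] fm_combine_linear)
  have zero: "s i \<le> b i" if "i \<in> I" "A i j = 0" for i
    using z_comb[of "2 * i"] that by (auto simp: fm_rows_def)
  have bounds: "U i' \<le> U i" if "i \<in> ?Ip" "i' \<in> ?In" for i i'
  proof -
    have "- A i' j * s i + A i j * s i' \<le> - A i' j * b i + A i j * b i'"
      using z_comb[of "2 * prod_encode (i, i') + 1"] that by (force simp: fm_rows_def)
    then show ?thesis
      using that by (simp add: U_def divide_simps algebra_simps)
  qed
  define v where "v = (if ?In = {} then (if ?Ip = {} then 0 else Min (U ` ?Ip)) else Max (U ` ?In))"
  have v_upper: "v \<le> U i" if "i \<in> ?Ip" for i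
  proof (cases "?In = {}")
    case False
    then have "Max (U ` ?In) \<in> U ` ?In"
      using I by (intro Max_in) auto
    then obtain i' where "i' \<in> ?In" "Max (U ` ?In) = U i'"
      by auto
    then show ?thesis using False bounds[OF that] by (auto simp: v_def)
  qed (use I that in \<open>auto simp: v_def\<close>)
  have v_lower: "U i \<le> v" if "i \<in> ?In" for i
    using I that by (auto simp: v_def intro: Max_ge)
  have "(\<Sum>j'\<in>insert j J. A i j' * (z(j := v)) j') \<le> b i" if "i \<in> I" for i
  proof -
    have "(\<Sum>j'\<in>insert j J. A i j' * (z(j := v)) j') = A i j * v + s i"
      using J by (auto simp: s_def intro!: sum.cong)
    moreover consider "A i j = 0" | "A i j > 0" | "A i j < 0" by linarith
    then have "A i j * v + s i \<le> b i"
    proof cases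
      case 2 then show ?thesis
        using v_upper[of i] that by (simp add: U_def pos_le_divide_eq mult.commute)
    next
      case 3 then show ?thesis
        using v_lower[of i] that by (simp add: U_def neg_divide_le_eq mult.commute)
    qed (use zero that in simp)
    ultimately show ?thesis by simp
  qed
  then show ?thesis by blast
qed

definition fm_pullback :: "(nat \<Rightarrow> 'j \<Rightarrow> real) \<Rightarrow> 'j \<Rightarrow> nat set \<Rightarrow> (nat \<Rightarrow> real) \<Rightarrow> nat \<Rightarrow> real" where
  "fm_pullback A j I y i =
     (if A i j = 0 then y (2 * i)
      else if A i j > 0 then (\<Sum>i'\<in>{i'\<in>I. A i' j < 0}. y (2 * prod_encode (i, i') + 1) * - A i' j)
      else (\<Sum>i'\<in>{i'\<in>I. A i' j > 0}. y (2 * prod_encode (i', i) + 1) * A i' j))"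

lemma sum_fm_pullback:
  assumes I: "finite I"
  shows "(\<Sum>i\<in>I. fm_pullback A j I y i * c i) = (\<Sum>n\<in>fm_rows A j I. y n * fm_combine A j c n)"
proof -
  let ?I0 = "{i\<in>I. A i j = 0}" and ?Ip = "{i\<in>I. A i j > 0}" and ?In = "{i\<in>I. A i j < 0}"
  let ?y = "\<lambda>i i'. y (2 * prod_encode (i, i') + 1)"
  have "I = ?I0 \<union> (?Ip \<union> ?In)" by auto
  then have "(\<Sum>i\<in>I. fm_pullback A j I y i * c i) = (\<Sum>i\<in>?I0. fm_pullback A j I y i * c i)
      + ((\<Sum>i\<in>?Ip. fm_pullback A j I y i * c i) + (\<Sum>i\<in>?In. fm_pullback A j I y i * c i))"
    using I by (simp add: sum.union_disjoint[symmetric] disjoint_iff)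
  also have "(\<Sum>i\<in>?I0. fm_pullback A j I y i * c i) = (\<Sum>i\<in>?I0. y (2 * i) * c i)"
    by (simp add: fm_pullback_def)
  also have "(\<Sum>i\<in>?Ip. fm_pullback A j I y i * c i) = (\<Sum>(i, i')\<in>?Ip \<times> ?In. ?y i i' * - A i' j * c i)"
    by (subst sum.cartesian_product[symmetric])
      (auto simp: fm_pullback_def sum_distrib_right intro!: sum.cong)
  also have "(\<Sum>i\<in>?In. fm_pullback A j I y i * c i) = (\<Sum>(i, i')\<in>?Ip \<times> ?In. ?y i i' * A i j * c i')"
    by (subst sum.cartesian_product[symmetric], subst sum.swap)
      (auto simp: fm_pullback_def sum_distrib_right intro!: sum.cong)
  also have "(\<Sum>(i, i')\<in>?Ip \<times> ?In. ?y i i' * - A i' j * c i)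
      + (\<Sum>(i, i')\<in>?Ip \<times> ?In. ?y i i' * A i j * c i')
    = (\<Sum>(i, i')\<in>?Ip \<times> ?In. ?y i i' * fm_combine A j c (2 * prod_encode (i, i') + 1))"
    unfolding sum.distrib[symmetric] by (rule sum.cong) (auto simp: algebra_simps)
  finally show ?thesis
    using I by (simp add: sum_fm_rows)
qed

lemma fm_certificate_lift:
  assumes I: "finite I"
    and y: "\<forall>n\<in>fm_rows A j I. 0 \<le> y n"
      "\<forall>j'\<in>J. (\<Sum>n\<in>fm_rows A j I. y n * fm_combine A j (\<lambda>i. A i j') n) = 0"
      "(\<Sum>n\<in>fm_rows A j I. y n * fm_combine A j b n) < 0"
  shows "\<exists>y'. (\<forall>i\<in>I. 0 \<le> y' i) \<and> (\<forall>j'\<in>insert j J. (\<Sum>i\<in>I. y' i * A i j') = 0)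
     \<and> (\<Sum>i\<in>I. y' i * b i) < 0"
proof (intro exI conjI ballI)
  have y_odd: "0 \<le> y (2 * prod_encode (i, i') + 1)" if "i \<in> I" "A i j > 0" "i' \<in> I" "A i' j < 0"
    for i i'
    using y(1) that by (force simp: fm_rows_def)
  show "0 \<le> fm_pullback A j I y i" if "i \<in> I" for i
  proof -
    consider "A i j = 0" | "A i j > 0" | "A i j < 0" by linarith
    then show ?thesis
      by cases (use y(1) y_odd that in \<open>auto simp: fm_pullback_def fm_rows_def
          intro!: sum_nonneg mult_nonneg_nonneg sum_nonpos mult_nonneg_nonpos\<close>)
  qed
  have "fm_combine A j (\<lambda>i. A i j) n = 0" if "n \<in> fm_rows A j I" for n
    using that by (auto simp: fm_rows_def)
  then show "(\<Sum>i\<in>I. fm_pullback A j I y i * A i j') = 0" if "j' \<in> insert j J" for j'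
    using that y(2) by (auto simp: sum_fm_pullback[OF I])
  show "(\<Sum>i\<in>I. fm_pullback A j I y i * b i) < 0"
    using y(3) by (simp add: sum_fm_pullback[OF I])
qed

lemma farkas_nat:
  fixes A :: "nat \<Rightarrow> 'j \<Rightarrow> real"
  assumes "finite J" "finite I"
  shows "(\<exists>z. \<forall>i\<in>I. (\<Sum>j\<in>J. A i j * z j) \<le> b i) \<or>
     (\<exists>y. (\<forall>i\<in>I. 0 \<le> y i) \<and> (\<forall>j\<in>J. (\<Sum>i\<in>I. y i * A i j) = 0) \<and> (\<Sum>i\<in>I. y i * b i) < 0)"
  using assms
proof (induction J arbitrary: I A b rule: finite_induct)
  case empty
  show ?case
  proof (cases "\<forall>i\<in>I. 0 \<le> b i")
    case False
    then obtain i0 where "i0 \<in> I" "b i0 < 0" by (auto simp: not_le)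
    have "(\<Sum>i\<in>I. (if i = i0 then 1 else 0) * b i) = (\<Sum>i\<in>I. if i = i0 then b i else 0)"
      by (rule sum.cong) auto
    then have "(\<Sum>i\<in>I. (if i = i0 then 1 else 0) * b i) < 0"
      using empty.prems \<open>i0 \<in> I\<close> \<open>b i0 < 0\<close> by simp
    then show ?thesis by (intro disjI2 exI[of _ "\<lambda>i. if i = i0 then 1 else 0"]) auto
  qed auto
next
  case (insert j J)
  from insert.IH[OF finite_fm_rows[OF insert.prems, of A j],
      where A = "\<lambda>n j'. fm_combine A j (\<lambda>i. A i j') n" and b = "fm_combine A j b"]
  show ?case
  proof (elim disjE exE conjE)
    fix z
    assume "\<forall>n\<in>fm_rows A j I. (\<Sum>j'\<in>J. fm_combine A j (\<lambda>i. A i j') n * z j') \<le> fm_combine A j b n"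
    from fm_solution_extend[OF insert.prems insert.hyps this] show ?thesis ..
  next
    fix y
    assume "\<forall>n\<in>fm_rows A j I. 0 \<le> y n"
      "\<forall>j'\<in>J. (\<Sum>n\<in>fm_rows A j I. y n * fm_combine A j (\<lambda>i. A i j') n) = 0"
      "(\<Sum>n\<in>fm_rows A j I. y n * fm_combine A j b n) < 0"
    from fm_certificate_lift[OF insert.prems this] show ?thesis ..
  qed
qed

lemma farkas:
  fixes A :: "'i \<Rightarrow> 'j \<Rightarrow> real"
  assumes "finite I" "finite J"
  shows "(\<exists>z. \<forall>i\<in>I. (\<Sum>j\<in>J. A i j * z j) \<le> b i) \<or>
     (\<exists>y. (\<forall>i\<in>I. 0 \<le> y i) \<and> (\<forall>j\<in>J. (\<Sum>i\<in>I. y i * A i j) = 0) \<and> (\<Sum>i\<in>I. y i * b i) < 0)"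
proof -
  let ?N = "{0..<card I}"
  obtain h where h: "bij_betw h ?N I"
    using ex_bij_betw_nat_finite[OF assms(1)] by blast
  have I_h: "I = h ` ?N" and inj: "inj_on h ?N"
    using h by (auto simp: bij_betw_def)
  have sum_h: "(\<Sum>i\<in>I. g i) = (\<Sum>n\<in>?N. g (h n))" for g :: "'i \<Rightarrow> real"
    using sum.reindex_bij_betw[OF h] by metis
  from farkas_nat[OF assms(2) finite_atLeastLessThan[of 0 "card I"], where A = "\<lambda>n. A (h n)" and b = "\<lambda>n. b (h n)"]
  show ?thesis
  proof (elim disjE exE conjE)
    fix z assume "\<forall>n\<in>?N. (\<Sum>j\<in>J. A (h n) j * z j) \<le> b (h n)"
    then have "\<forall>i\<in>h ` ?N. (\<Sum>j\<in>J. A i j * z j) \<le> b i" by blast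
    then show ?thesis unfolding I_h[symmetric] by blast
  next
    fix y assume y: "\<forall>n\<in>?N. 0 \<le> y n" "\<forall>j\<in>J. (\<Sum>n\<in>?N. y n * A (h n) j) = 0"
      "(\<Sum>n\<in>?N. y n * b (h n)) < 0"
    define y' where "y' i = y (the_inv_into ?N h i)" for i
    have y'_h: "y' (h n) = y n" if "n \<in> ?N" for n
      using the_inv_into_f_f[OF inj that] by (simp add: y'_def)
    have "(\<Sum>i\<in>I. y' i * c i) = (\<Sum>n\<in>?N. y n * c (h n))" for c
      unfolding sum_h by (rule sum.cong) (simp_all add: y'_h)
    moreover have "\<forall>i\<in>h ` ?N. 0 \<le> y' i"
      using y(1) y'_h by auto
    ultimately show ?thesis
      using y(2,3) unfolding I_h[symmetric] by (intro disjI2 exI[of _ y']) auto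
  qed
qed

section \<open>The minimax theorem for finite matrix games\<close>

definition is_mixture :: "'x set \<Rightarrow> ('x \<Rightarrow> real) \<Rightarrow> bool" where
  "is_mixture S w \<longleftrightarrow> (\<forall>x\<in>S. 0 \<le> w x) \<and> sum w S = 1"

lemma bilinear_sandwich:
  assumes "\<forall>p\<in>P. 0 \<le> x p" "\<forall>q\<in>Q. 0 \<le> y q"
    and "\<forall>p\<in>P. (\<Sum>q\<in>Q. A p q * y q) \<le> a" "\<forall>q\<in>Q. b \<le> (\<Sum>p\<in>P. x p * A p q)"
  shows "b * sum y Q \<le> a * (sum x P :: real)"
proof -
  have "b * sum y Q = (\<Sum>q\<in>Q. y q * b)"
    by (simp add: sum_distrib_left mult.commute)
  also have "\<dots> \<le> (\<Sum>q\<in>Q. y q * (\<Sum>p\<in>P. x p * A p q))"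
    using assms by (intro sum_mono mult_left_mono) auto
  also have "\<dots> = (\<Sum>p\<in>P. x p * (\<Sum>q\<in>Q. A p q * y q))"
    unfolding sum_distrib_left by (subst sum.swap) (simp add: mult_ac)
  also have "\<dots> \<le> (\<Sum>p\<in>P. x p * a)"
    using assms by (intro sum_mono mult_left_mono) auto
  also have "\<dots> = a * sum x P"
    by (simp add: sum_distrib_left mult.commute)
  finally show ?thesis .
qed

lemma positive_game_solution_imp_saddle:
  fixes A :: "'p \<Rightarrow> 'q \<Rightarrow> real"
  assumes "finite P" "finite Q" "Q \<noteq> {}"
    and nonneg: "\<forall>p\<in>P. 0 \<le> \<pi> p" "\<forall>q\<in>Q. 0 \<le> \<rho> q"
    and rows: "\<forall>p\<in>P. (\<Sum>q\<in>Q. A p q * \<rho> q) \<le> 1"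
    and cols: "\<forall>q\<in>Q. 1 \<le> (\<Sum>p\<in>P. \<pi> p * A p q)"
    and "sum \<pi> P \<le> sum \<rho> Q"
  shows "\<exists>\<pi> \<rho> v. is_mixture P \<pi> \<and> is_mixture Q \<rho> \<and>
    (\<forall>q\<in>Q. v \<le> (\<Sum>p\<in>P. \<pi> p * A p q)) \<and> (\<forall>p\<in>P. (\<Sum>q\<in>Q. A p q * \<rho> q) \<le> v)"
proof -
  have "sum \<rho> Q \<le> sum \<pi> P"
    using bilinear_sandwich[OF nonneg rows cols] by simp
  then have sums_eq: "sum \<rho> Q = sum \<pi> P"
    using \<open>sum \<pi> P \<le> sum \<rho> Q\<close> by linarith
  define s where "s = sum \<pi> P"
  obtain q0 where "q0 \<in> Q" using \<open>Q \<noteq> {}\<close> by blast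
  have "s > 0"
  proof (rule ccontr)
    assume "\<not> s > 0"
    then have "sum \<pi> P = 0"
      using sum_nonneg[of P \<pi>] nonneg by (simp add: s_def)
    then have "\<forall>p\<in>P. \<pi> p = 0"
      using sum_nonneg_eq_0_iff[OF \<open>finite P\<close>] nonneg by blast
    then show False using cols \<open>q0 \<in> Q\<close> by simp
  qed
  show ?thesis
  proof (intro exI conjI ballI)
    show "is_mixture P (\<lambda>p. \<pi> p / s)" "is_mixture Q (\<lambda>q. \<rho> q / s)"
      using nonneg \<open>s > 0\<close> sums_eq
      by (auto simp: is_mixture_def s_def sum_divide_distrib[symmetric])
    show "1 / s \<le> (\<Sum>p\<in>P. \<pi> p / s * A p q)" if "q \<in> Q" for q
      using cols that \<open>s > 0\<close> by (simp add: sum_divide_distrib[symmetric] divide_right_mono)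
    show "(\<Sum>q\<in>Q. A p q * (\<rho> q / s)) \<le> 1 / s" if "p \<in> P" for p
      using rows that \<open>s > 0\<close> by (simp add: sum_divide_distrib[symmetric] divide_right_mono)
  qed
qed

lemma positive_game_certificate_bound:
  fixes A :: "'p \<Rightarrow> 'q \<Rightarrow> real"
  assumes "finite P" "P \<noteq> {}" "finite Q" and pos: "\<forall>p\<in>P. \<forall>q\<in>Q. A p q > 0"
    and nonneg: "\<forall>p\<in>P. 0 \<le> \<delta> p" "\<forall>q\<in>Q. 0 \<le> \<gamma> q"
    and rows: "\<forall>p\<in>P. (\<Sum>q\<in>Q. A p q * \<gamma> q) \<le> e"
    and cols: "\<forall>q\<in>Q. e \<le> (\<Sum>p\<in>P. \<delta> p * A p q)"
  shows "sum \<gamma> Q \<le> sum \<delta> P"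
proof (cases "e > 0")
  case True
  then show ?thesis
    using bilinear_sandwich[OF nonneg rows cols] by simp
next
  case False
  obtain p0 where "p0 \<in> P" using \<open>P \<noteq> {}\<close> by blast
  have "\<forall>q\<in>Q. \<gamma> q = 0"
  proof (rule ccontr)
    assume "\<not> (\<forall>q\<in>Q. \<gamma> q = 0)"
    then obtain q1 where "q1 \<in> Q" "\<gamma> q1 > 0" using nonneg by force
    moreover have "0 \<le> A p0 q * \<gamma> q" if "q \<in> Q" for q
      using pos nonneg \<open>p0 \<in> P\<close> that by (simp add: less_imp_le)
    ultimately have "0 < (\<Sum>q\<in>Q. A p0 q * \<gamma> q)"
      using pos \<open>p0 \<in> P\<close> \<open>finite Q\<close> by (intro sum_pos2[of Q q1]) auto
    then show False using rows \<open>p0 \<in> P\<close> False by force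
  qed
  then show ?thesis using nonneg by (simp add: sum_nonneg)
qed

datatype ('p, 'q) minimax_row = Nonneg_row 'p | Nonneg_col 'q | Row_bound 'p | Col_bound 'q | Balance

text \<open>For a positive matrix \<open>A\<close> the linear system \<open>\<pi>, \<rho> \<ge> 0\<close>, \<open>A \<rho> \<le> 1\<close>, \<open>\<pi> A \<ge> 1\<close>,
  \<open>\<Sum> \<pi> \<le> \<Sum> \<rho>\<close> in the variables \<open>\<pi> p = z (Inl p)\<close>, \<open>\<rho> q = z (Inr q)\<close> has a solution, which
  normalised is a saddle point: by Farkas' lemma, since a certificate of infeasibility would violate
  \<open>positive_game_certificate_bound\<close>.\<close>

fun minimax_coeff :: "('p \<Rightarrow> 'q \<Rightarrow> real) \<Rightarrow> ('p, 'q) minimax_row \<Rightarrow> 'p + 'q \<Rightarrow> real" where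
  "minimax_coeff A (Nonneg_row p) j = (if j = Inl p then -1 else 0)"
| "minimax_coeff A (Nonneg_col q) j = (if j = Inr q then -1 else 0)"
| "minimax_coeff A (Row_bound p) j = (case j of Inl _ \<Rightarrow> 0 | Inr q \<Rightarrow> A p q)"
| "minimax_coeff A (Col_bound q) j = (case j of Inl p \<Rightarrow> - A p q | Inr _ \<Rightarrow> 0)"
| "minimax_coeff A Balance j = (case j of Inl _ \<Rightarrow> 1 | Inr _ \<Rightarrow> -1)"

fun minimax_rhs :: "('p, 'q) minimax_row \<Rightarrow> real" where
  "minimax_rhs (Row_bound p) = 1"
| "minimax_rhs (Col_bound q) = -1"
| "minimax_rhs _ = 0"

definition minimax_rows :: "'p set \<Rightarrow> 'q set \<Rightarrow> ('p, 'q) minimax_row set" where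
  "minimax_rows P Q =
     insert Balance (Nonneg_row ` P \<union> (Nonneg_col ` Q \<union> (Row_bound ` P \<union> Col_bound ` Q)))"

lemma mem_minimax_rows [simp]:
  "Nonneg_row p \<in> minimax_rows P Q \<longleftrightarrow> p \<in> P" "Row_bound p \<in> minimax_rows P Q \<longleftrightarrow> p \<in> P"
  "Nonneg_col q \<in> minimax_rows P Q \<longleftrightarrow> q \<in> Q" "Col_bound q \<in> minimax_rows P Q \<longleftrightarrow> q \<in> Q"
  "Balance \<in> minimax_rows P Q"
  by (auto simp: minimax_rows_def)

lemma sum_minimax_rows:
  assumes "finite P" "finite Q"
  shows "(\<Sum>r\<in>minimax_rows P Q. g r) = (\<Sum>p\<in>P. g (Nonneg_row p)) + (\<Sum>q\<in>Q. g (Nonneg_col q))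
     + (\<Sum>p\<in>P. g (Row_bound p)) + (\<Sum>q\<in>Q. g (Col_bound q)) + g Balance"
proof -
  have "Nonneg_row ` P \<inter> (Nonneg_col ` Q \<union> (Row_bound ` P \<union> Col_bound ` Q)) = {}"
    "Nonneg_col ` Q \<inter> (Row_bound ` P \<union> Col_bound ` Q) = {}" "Row_bound ` P \<inter> Col_bound ` Q = {}"
    by auto
  then show ?thesis
    using assms unfolding minimax_rows_def
    by (simp add: sum.union_disjoint sum.reindex inj_on_def image_iff add_ac)
qed

lemma sum_plus_vars:
  "finite P \<Longrightarrow> finite Q \<Longrightarrow> (\<Sum>j\<in>P <+> Q. g j) = (\<Sum>p\<in>P. g (Inl p)) + (\<Sum>q\<in>Q. g (Inr q))"
  by (simp add: sum.Plus)

lemma sum_if_eq_mult: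
  "finite S \<Longrightarrow> (\<Sum>y\<in>S. (if y = x then c else 0) * f y) = (if x \<in> S then c * f x else (0 :: real))"
  by (simp add: if_distrib[of "\<lambda>c. c * _"] sum.delta cong: if_cong)

lemma minimax_system_feasible:
  fixes A :: "'p \<Rightarrow> 'q \<Rightarrow> real"
  assumes P: "finite P" "P \<noteq> {}" and Q: "finite Q" and pos: "\<forall>p\<in>P. \<forall>q\<in>Q. A p q > 0"
  shows "\<exists>z. \<forall>r\<in>minimax_rows P Q. (\<Sum>j\<in>P <+> Q. minimax_coeff A r j * z j) \<le> minimax_rhs r"
proof (rule ccontr)
  assume "\<nexists>z. \<forall>r\<in>minimax_rows P Q. (\<Sum>j\<in>P <+> Q. minimax_coeff A r j * z j) \<le> minimax_rhs r"
  moreover have "finite (minimax_rows P Q)" "finite (P <+> Q)"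
    using P Q by (auto simp: minimax_rows_def)
  ultimately obtain y where y: "\<forall>r\<in>minimax_rows P Q. 0 \<le> y r"
      "\<forall>j\<in>P <+> Q. (\<Sum>r\<in>minimax_rows P Q. y r * minimax_coeff A r j) = 0"
      "(\<Sum>r\<in>minimax_rows P Q. y r * minimax_rhs r) < 0"
    using farkas[of "minimax_rows P Q" "P <+> Q" "minimax_coeff A" minimax_rhs] by blast
  have nonneg: "\<forall>p\<in>P. 0 \<le> y (Row_bound p)" "\<forall>q\<in>Q. 0 \<le> y (Col_bound q)"
    "\<forall>p\<in>P. 0 \<le> y (Nonneg_row p)" "\<forall>q\<in>Q. 0 \<le> y (Nonneg_col q)"
    using y(1) by auto
  have "\<forall>p\<in>P. (\<Sum>q\<in>Q. A p q * y (Col_bound q)) \<le> y Balance"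
  proof
    fix p assume "p \<in> P"
    then have "- y (Nonneg_row p) - (\<Sum>q\<in>Q. y (Col_bound q) * A p q) + y Balance = 0"
      using bspec[OF y(2) InlI[OF \<open>p \<in> P\<close>]] P Q
      by (simp add: sum_minimax_rows sum_negf if_distrib[of "\<lambda>c. _ * c"] cong: if_cong)
    then show "(\<Sum>q\<in>Q. A p q * y (Col_bound q)) \<le> y Balance"
      using bspec[OF nonneg(3) \<open>p \<in> P\<close>] by (simp add: mult.commute)
  qed
  moreover have "\<forall>q\<in>Q. y Balance \<le> (\<Sum>p\<in>P. y (Row_bound p) * A p q)"
  proof
    fix q assume "q \<in> Q"
    then have "- y (Nonneg_col q) + (\<Sum>p\<in>P. y (Row_bound p) * A p q) - y Balance = 0"
      using bspec[OF y(2) InrI[OF \<open>q \<in> Q\<close>]] P Q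
      by (simp add: sum_minimax_rows if_distrib[of "\<lambda>c. _ * c"] cong: if_cong)
    then show "y Balance \<le> (\<Sum>p\<in>P. y (Row_bound p) * A p q)"
      using bspec[OF nonneg(4) \<open>q \<in> Q\<close>] by simp
  qed
  ultimately have "(\<Sum>q\<in>Q. y (Col_bound q)) \<le> (\<Sum>p\<in>P. y (Row_bound p))"
    using positive_game_certificate_bound[OF P Q pos nonneg(1,2)] by blast
  moreover have "(\<Sum>p\<in>P. y (Row_bound p)) < (\<Sum>q\<in>Q. y (Col_bound q))"
    using y(3) P Q by (simp add: sum_minimax_rows sum_negf)
  ultimately show False by simp
qed

lemma minimax_positive:
  fixes A :: "'p \<Rightarrow> 'q \<Rightarrow> real"
  assumes P: "finite P" "P \<noteq> {}" and Q: "finite Q" "Q \<noteq> {}"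
    and pos: "\<forall>p\<in>P. \<forall>q\<in>Q. A p q > 0"
  shows "\<exists>\<pi> \<rho> v. is_mixture P \<pi> \<and> is_mixture Q \<rho> \<and>
    (\<forall>q\<in>Q. v \<le> (\<Sum>p\<in>P. \<pi> p * A p q)) \<and> (\<forall>p\<in>P. (\<Sum>q\<in>Q. A p q * \<rho> q) \<le> v)"
proof -
  obtain z where z: "\<forall>r\<in>minimax_rows P Q. (\<Sum>j\<in>P <+> Q. minimax_coeff A r j * z j) \<le> minimax_rhs r"
    using minimax_system_feasible[OF P Q(1) pos] by blast
  have row: "(\<Sum>p\<in>P. minimax_coeff A r (Inl p) * z (Inl p))
      + (\<Sum>q\<in>Q. minimax_coeff A r (Inr q) * z (Inr q)) \<le> minimax_rhs r"
    if "r \<in> minimax_rows P Q" for r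
    using z that P Q by (simp add: sum_plus_vars)
  show ?thesis
  proof (rule positive_game_solution_imp_saddle[OF P(1) Q, of "\<lambda>p. z (Inl p)" "\<lambda>q. z (Inr q)"])
    show "\<forall>p\<in>P. 0 \<le> z (Inl p)"
      using row[of "Nonneg_row _"] P by (simp add: sum_if_eq_mult)
    show "\<forall>q\<in>Q. 0 \<le> z (Inr q)"
      using row[of "Nonneg_col _"] Q by (simp add: sum_if_eq_mult)
    show "\<forall>p\<in>P. (\<Sum>q\<in>Q. A p q * z (Inr q)) \<le> 1"
      using row[of "Row_bound _"] by simp
    show "\<forall>q\<in>Q. 1 \<le> (\<Sum>p\<in>P. z (Inl p) * A p q)"
      using row[of "Col_bound _"] by (simp add: sum_negf mult.commute)
    show "(\<Sum>p\<in>P. z (Inl p)) \<le> (\<Sum>q\<in>Q. z (Inr q))"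
      using row[of Balance] by (simp add: sum_negf)
  qed
qed

lemma minimax_matrix:
  fixes A :: "'p \<Rightarrow> 'q \<Rightarrow> real"
  assumes P: "finite P" "P \<noteq> {}" and Q: "finite Q" "Q \<noteq> {}"
  shows "\<exists>\<pi> \<rho> v. is_mixture P \<pi> \<and> is_mixture Q \<rho> \<and>
    (\<forall>q\<in>Q. v \<le> (\<Sum>p\<in>P. \<pi> p * A p q)) \<and> (\<forall>p\<in>P. (\<Sum>q\<in>Q. A p q * \<rho> q) \<le> v)"
proof -
  define c where "c = 1 - Min ((\<lambda>(p, q). A p q) ` (P \<times> Q))"
  have "Min ((\<lambda>(p, q). A p q) ` (P \<times> Q)) \<le> A p q" if "p \<in> P" "q \<in> Q" for p q
    using P Q that by (intro Min_le) auto
  then have "\<forall>p\<in>P. \<forall>q\<in>Q. A p q + c > 0"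
    by (force simp: c_def)
  then obtain \<pi> \<rho> v where mix: "is_mixture P \<pi>" "is_mixture Q \<rho>"
    and v: "\<forall>q\<in>Q. v \<le> (\<Sum>p\<in>P. \<pi> p * (A p q + c))" "\<forall>p\<in>P. (\<Sum>q\<in>Q. (A p q + c) * \<rho> q) \<le> v"
    using minimax_positive[OF P Q, of "\<lambda>p q. A p q + c"] by blast
  have "(\<Sum>p\<in>P. \<pi> p * (A p q + c)) = (\<Sum>p\<in>P. \<pi> p * A p q) + c" for q
    using mix(1) by (simp add: is_mixture_def distrib_left sum.distrib sum_distrib_right[symmetric])
  moreover have "(\<Sum>q\<in>Q. (A p q + c) * \<rho> q) = (\<Sum>q\<in>Q. A p q * \<rho> q) + c" for p
    using mix(2) by (simp add: is_mixture_def distrib_right sum.distrib sum_distrib_left[symmetric])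
  ultimately show ?thesis
    using mix v by (intro exI[of _ \<pi>] exI[of _ \<rho>] exI[of _ "v - c"]) auto
qed

section \<open>Realization plans and their payoff\<close>

lemma finite_lists_length [simp]: "finite {h :: 'x::finite list. length h = n}"
  using finite_lists_length_eq[of "UNIV :: 'x set" n] by simp

lemma sum_lists_length_Suc:
  "(\<Sum>h | length h = Suc n. f h) = (\<Sum>h | length h = n. \<Sum>a\<in>UNIV. f (h @ [a :: 'x::finite]))"
proof -
  have eq: "{h :: 'x list. length h = Suc n} = (\<lambda>(h, a). h @ [a]) ` ({h. length h = n} \<times> UNIV)"
    by (auto simp: length_Suc_conv_rev image_iff)
  have inj: "inj_on (\<lambda>(h, a). h @ [a :: 'x]) ({h. length h = n} \<times> UNIV)"
    by (auto simp: inj_on_def)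
  show ?thesis
    unfolding eq sum.reindex[OF inj] by (simp add: sum.cartesian_product case_prod_beta)
qed

lemma finite_lists_length_less [simp]: "finite {h :: 'x::finite list. length h < n}"
  using finite_lists_length_le[of "UNIV :: 'x set" n] by (rule finite_subset[rotated]) auto

definition hist_sum :: "nat \<Rightarrow> ('a::finite list \<Rightarrow> 'b::finite list \<Rightarrow> real) \<Rightarrow> real" where
  "hist_sum t f = (\<Sum>hA | length hA = t. \<Sum>hB | length hB = t. f hA hB)"

lemma hist_sum_cong:
  "(\<And>hA hB. length hA = t \<Longrightarrow> length hB = t \<Longrightarrow> f hA hB = g hA hB) \<Longrightarrow> hist_sum t f = hist_sum t g"
  by (auto simp: hist_sum_def intro!: sum.cong)

lemma hist_sum_nonneg:
  "(\<And>hA hB. length hA = t \<Longrightarrow> length hB = t \<Longrightarrow> 0 \<le> f hA hB) \<Longrightarrow> 0 \<le> hist_sum t f"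
  by (auto simp: hist_sum_def intro!: sum_nonneg)

lemma hist_sum_zero:
  "(\<And>hA hB. length hA = t \<Longrightarrow> length hB = t \<Longrightarrow> f hA hB = 0) \<Longrightarrow> hist_sum t f = 0"
  by (auto simp: hist_sum_def intro!: sum.neutral)

lemma hist_sum_add: "hist_sum t (\<lambda>hA hB. f hA hB + g hA hB) = hist_sum t f + hist_sum t g"
  by (simp add: hist_sum_def sum.distrib)

lemma hist_sum_diff: "hist_sum t (\<lambda>hA hB. f hA hB - g hA hB) = hist_sum t f - hist_sum t g"
  by (simp add: hist_sum_def sum_subtractf)

lemma hist_sum_mult: "hist_sum t (\<lambda>hA hB. c * f hA hB) = c * hist_sum t f"
  by (simp add: hist_sum_def sum_distrib_left)

lemma hist_sum_sum: "hist_sum t (\<lambda>hA hB. \<Sum>i\<in>I. f i hA hB) = (\<Sum>i\<in>I. hist_sum t (f i))"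
  unfolding hist_sum_def by (subst sum.swap) (rule sum.cong[OF refl], rule sum.swap)

lemma hist_sum_0: "hist_sum 0 f = f [] []"
  by (simp add: hist_sum_def)

lemma hist_sum_Suc:
  "hist_sum (Suc t) f = hist_sum t (\<lambda>hA hB. \<Sum>a\<in>UNIV. \<Sum>b\<in>UNIV. f (hA @ [a]) (hB @ [b]))"
  unfolding hist_sum_def sum_lists_length_Suc by (intro sum.cong refl sum.swap)

lemma hist_sum_minus: "hist_sum t (\<lambda>hA hB. - f hA hB) = - hist_sum t f"
  by (simp add: hist_sum_def sum_negf)

lemma hist_sum_swap: "hist_sum t (\<lambda>hB hA. f hA hB) = hist_sum t f"
  unfolding hist_sum_def by (rule sum.swap)

definition stage_payoff ::
  "('k::finite \<Rightarrow> 'l::finite \<Rightarrow> 'a::finite \<Rightarrow> 'b::finite \<Rightarrow> real) \<Rightarrow> ('k \<Rightarrow> 'a list \<Rightarrow> 'b list \<Rightarrow> 'a \<Rightarrow> real)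
   \<Rightarrow> ('l \<Rightarrow> 'a list \<Rightarrow> 'b list \<Rightarrow> 'b \<Rightarrow> real) \<Rightarrow> 'a list \<Rightarrow> 'b list \<Rightarrow> real" where
  "stage_payoff M x y hA hB = (\<Sum>k\<in>UNIV. \<Sum>l\<in>UNIV. \<Sum>a\<in>UNIV. \<Sum>b\<in>UNIV. M k l a b * x k hA hB a * y l hA hB b)"

definition plan_payoff ::
  "nat \<Rightarrow> ('k::finite \<Rightarrow> 'l::finite \<Rightarrow> 'a::finite \<Rightarrow> 'b::finite \<Rightarrow> real)
   \<Rightarrow> ('k \<Rightarrow> 'a list \<Rightarrow> 'b list \<Rightarrow> 'a \<Rightarrow> real) \<Rightarrow> ('l \<Rightarrow> 'a list \<Rightarrow> 'b list \<Rightarrow> 'b \<Rightarrow> real) \<Rightarrow> real" where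
  "plan_payoff T M x y = (\<Sum>t<T. hist_sum t (stage_payoff M x y))"

lemma plan_payoff_cong:
  assumes "\<And>k hA hB a. length hA = length hB \<Longrightarrow> length hA < T \<Longrightarrow> x k hA hB a = x' k hA hB a"
    and "\<And>l hA hB b. length hA = length hB \<Longrightarrow> length hA < T \<Longrightarrow> y l hA hB b = y' l hA hB b"
  shows "plan_payoff T M x y = plan_payoff T M x' y'"
  unfolding plan_payoff_def
  by (intro sum.cong refl hist_sum_cong) (simp add: stage_payoff_def assms)

lemma plan_payoff_mix_left:
  "finite S \<Longrightarrow> plan_payoff T M (\<lambda>k hA hB a. \<Sum>\<pi>\<in>S. w \<pi> * \<pi> k hA hB a) y
     = (\<Sum>\<pi>\<in>S. w \<pi> * plan_payoff T M \<pi> y)"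
  unfolding plan_payoff_def stage_payoff_def
  by (simp add: sum_distrib_left sum_distrib_right sum.swap[where B = S] hist_sum_sum hist_sum_mult
      mult.assoc mult.left_commute)

lemma plan_payoff_mix_right:
  "finite S \<Longrightarrow> plan_payoff T M x (\<lambda>l hA hB b. \<Sum>\<rho>\<in>S. w \<rho> * \<rho> l hA hB b)
     = (\<Sum>\<rho>\<in>S. w \<rho> * plan_payoff T M x \<rho>)"
  unfolding plan_payoff_def stage_payoff_def
  by (simp add: sum_distrib_left sum_distrib_right sum.swap[where B = S] hist_sum_sum hist_sum_mult
      mult.assoc mult.left_commute)

lemma realY_nonneg: "realY T q y \<Longrightarrow> length hA = length hB \<Longrightarrow> length hA < T \<Longrightarrow> 0 \<le> y l hA hB b"
  by (simp add: realY_def)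

lemma sum_mixture_swap: "(\<Sum>a\<in>A. \<Sum>i\<in>S. w i * f i a) = (\<Sum>i\<in>S. w i * sum (f i) A :: real)"
  by (simp add: sum_distrib_left sum.swap[of _ S])

lemma realY_mix:
  fixes S :: "('l \<Rightarrow> 'a::finite list \<Rightarrow> 'b::finite list \<Rightarrow> 'b \<Rightarrow> real) set"
  assumes S: "finite S" "\<forall>\<rho>\<in>S. realY T q \<rho>" and w: "is_mixture S w"
  shows "realY T q (\<lambda>l hA hB b. \<Sum>\<rho>\<in>S. w \<rho> * \<rho> l hA hB b)"
  unfolding realY_def sum_mixture_swap
proof (intro conjI allI impI)
  fix l and hA :: "'a list" and hB :: "'b list" and b
  assume "length hA = length hB \<and> length hA < T"
  then show "0 \<le> (\<Sum>\<rho>\<in>S. w \<rho> * \<rho> l hA hB b)"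
    using S w by (auto simp: is_mixture_def realY_def intro!: sum_nonneg)
next
  fix l show "(\<Sum>\<rho>\<in>S. w \<rho> * sum (\<rho> l [] []) UNIV) = q l"
    using S w by (simp add: realY_def is_mixture_def sum_distrib_right[symmetric])
next
  fix l and hA :: "'a list" and hB :: "'b list" and a b
  assume "length hA = length hB \<and> length hA + 1 < T"
  then show "(\<Sum>\<rho>\<in>S. w \<rho> * sum (\<rho> l (hA @ [a]) (hB @ [b])) UNIV) = (\<Sum>\<rho>\<in>S. w \<rho> * \<rho> l hA hB b)"
    using S by (simp add: realY_def)
qed

lemma realX_mix:
  fixes S :: "('k \<Rightarrow> 'a::finite list \<Rightarrow> 'b::finite list \<Rightarrow> 'a \<Rightarrow> real) set"
  assumes S: "finite S" "\<forall>\<pi>\<in>S. realX T p \<pi>" and w: "is_mixture S w"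
  shows "realX T p (\<lambda>k hA hB a. \<Sum>\<pi>\<in>S. w \<pi> * \<pi> k hA hB a)"
  unfolding realX_def sum_mixture_swap
proof (intro conjI allI impI)
  fix k and hA :: "'a list" and hB :: "'b list" and a
  assume "length hA = length hB \<and> length hA < T"
  then show "0 \<le> (\<Sum>\<pi>\<in>S. w \<pi> * \<pi> k hA hB a)"
    using S w by (auto simp: is_mixture_def realX_def intro!: sum_nonneg)
next
  fix k show "(\<Sum>\<pi>\<in>S. w \<pi> * sum (\<pi> k [] []) UNIV) = p k"
    using S w by (simp add: realX_def is_mixture_def sum_distrib_right[symmetric])
next
  fix k and hA :: "'a list" and hB :: "'b list" and a b
  assume "length hA = length hB \<and> length hA + 1 < T"
  then show "(\<Sum>\<pi>\<in>S. w \<pi> * sum (\<pi> k (hA @ [a]) (hB @ [b])) UNIV) = (\<Sum>\<pi>\<in>S. w \<pi> * \<pi> k hA hB a)"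
    using S by (simp add: realX_def)
qed

section \<open>The linear program of player 1\<close>

definition lp1_lhs where
  "lp1_lhs T M x u l hA hB b' =
     (\<Sum>k\<in>UNIV. \<Sum>a'\<in>UNIV. M k l a' b' * x k hA hB a') + (\<Sum>a'\<in>UNIV. conv0 T u l hA hB a' b')"

definition lp1_rhs where
  "lp1_rhs T u0 u l hA hB =
     (if hA = [] then u0 l else conv0 T u l (butlast hA) (butlast hB) (last hA) (last hB))"

text \<open>The two families of constraints, written uniformly: the constraint at the history
  \<open>(hA, hB)\<close> has the right-hand side \<open>u0\<close> at the root and the multiplier of the parent history
  otherwise.\<close>

lemma lp1_feasible_iff:
  fixes x :: "'k::finite \<Rightarrow> 'a::finite list \<Rightarrow> 'b::finite list \<Rightarrow> 'a \<Rightarrow> real"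
  assumes "T \<ge> 1"
  shows "lp1_feasible T p M x u0 u \<longleftrightarrow> realX T p x \<and> (\<forall>l hA hB b'. length hA = length hB \<and>
     length hA < T \<longrightarrow> lp1_rhs T u0 u l hA hB \<le> lp1_lhs T M x u l hA hB b')"
proof -
  have "(\<forall>l hA hB b'. length hA = length hB \<and> length hA < T \<longrightarrow>
          lp1_rhs T u0 u l hA hB \<le> lp1_lhs T M x u l hA hB b')
    \<longleftrightarrow> (\<forall>l b'. lp1_rhs T u0 u l [] [] \<le> lp1_lhs T M x u l [] [] b') \<and>
        (\<forall>l hA hB a b b'. length hA = length hB \<and> length hA + 1 < T \<longrightarrow>
          lp1_rhs T u0 u l (hA @ [a]) (hB @ [b]) \<le> lp1_lhs T M x u l (hA @ [a]) (hB @ [b]) b')"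
    (is "?all \<longleftrightarrow> ?root \<and> ?step")
  proof
    assume ?all
    then show "?root \<and> ?step" using assms by auto
  next
    assume "?root \<and> ?step"
    then have ?root ?step by blast+
    show ?all
    proof (intro allI impI)
      fix l and hA :: "'a list" and hB :: "'b list" and b'
      assume "length hA = length hB \<and> length hA < T"
      then show "lp1_rhs T u0 u l hA hB \<le> lp1_lhs T M x u l hA hB b'"
        using \<open>?root\<close> \<open>?step\<close>
        by (cases hA rule: rev_cases; cases hB rule: rev_cases) auto
    qed
  qed
  then show ?thesis
    by (auto simp: lp1_feasible_def lp1_lhs_def lp1_rhs_def)
qed

definition lp1_slack where
  "lp1_slack T M x u0 u y = (\<Sum>t<T. hist_sum t (\<lambda>hA hB. \<Sum>l\<in>UNIV. \<Sum>b'\<in>UNIV.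
     y l hA hB b' * (lp1_lhs T M x u l hA hB b' - lp1_rhs T u0 u l hA hB)))"

lemma lp1_slack_nonneg:
  assumes "lp1_feasible T p M x u0 u" "realY T q y" "T \<ge> 1"
  shows "0 \<le> lp1_slack T M x u0 u y"
  using assms unfolding lp1_slack_def lp1_feasible_iff[OF assms(3)]
  by (auto intro!: sum_nonneg hist_sum_nonneg mult_nonneg_nonneg simp: realY_nonneg[OF assms(2)])

text \<open>The payoff splits into the objective and the slack because the continuation terms
  \<open>conv0 T u\<close> telescope: summed against \<open>y\<close>, the term of the left-hand side at stage \<open>t\<close>
  reappears as the right-hand side at stage \<open>t + 1\<close>, and vanishes at the last stage.\<close>

lemma plan_payoff_eq_lp1_obj_plus_slack:
  fixes M :: "'k::finite \<Rightarrow> 'l::finite \<Rightarrow> 'a::finite \<Rightarrow> 'b::finite \<Rightarrow> real"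
  assumes Y: "realY T q y" and T: "T \<ge> 1"
  shows "plan_payoff T M x y = lp1_obj q u0 + lp1_slack T M x u0 u y"
proof -
  define C where "C t = hist_sum t (\<lambda>hA hB. \<Sum>l\<in>UNIV. \<Sum>b'\<in>UNIV.
      y l hA hB b' * (\<Sum>a'\<in>UNIV. conv0 T u l hA hB a' b'))" for t
  define R where "R t = hist_sum t (\<lambda>hA hB. \<Sum>l\<in>UNIV. \<Sum>b'\<in>UNIV.
      y l hA hB b' * lp1_rhs T u0 u l hA hB)" for t
  have lhs: "hist_sum t (\<lambda>hA hB. \<Sum>l\<in>UNIV. \<Sum>b'\<in>UNIV. y l hA hB b' * lp1_lhs T M x u l hA hB b')
      = hist_sum t (stage_payoff M x y) + C t" for t
  proof -
    have "(\<Sum>l\<in>UNIV. \<Sum>b'\<in>UNIV. y l hA hB b' * (\<Sum>k\<in>UNIV. \<Sum>a'\<in>UNIV. M k l a' b' * x k hA hB a'))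
        = stage_payoff M x y hA hB" for hA hB
      unfolding stage_payoff_def
      by (simp add: sum_distrib_left sum.swap[where A = "UNIV :: 'l set"]
          sum.swap[where B = "UNIV :: 'b set"] mult.commute mult.left_commute)
    then show ?thesis
      by (simp add: C_def lp1_lhs_def distrib_left sum.distrib hist_sum_add)
  qed
  have R_0: "R 0 = lp1_obj q u0"
    using Y by (simp add: R_def hist_sum_0 lp1_rhs_def lp1_obj_def realY_def sum_distrib_right[symmetric])
  have R_Suc: "R (Suc t) = C t" if "Suc t < T" for t
  proof -
    have "R (Suc t) = hist_sum t (\<lambda>hA hB. \<Sum>a\<in>UNIV. \<Sum>b\<in>UNIV. \<Sum>l\<in>UNIV.
        (\<Sum>b'\<in>UNIV. y l (hA @ [a]) (hB @ [b]) b') * conv0 T u l hA hB a b)"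
      by (simp add: R_def hist_sum_Suc lp1_rhs_def sum_distrib_right)
    also have "\<dots> = hist_sum t (\<lambda>hA hB. \<Sum>a\<in>UNIV. \<Sum>b\<in>UNIV. \<Sum>l\<in>UNIV.
        y l hA hB b * conv0 T u l hA hB a b)"
      using Y that by (intro hist_sum_cong) (simp add: realY_def)
    also have "\<dots> = C t"
      unfolding C_def
      by (intro hist_sum_cong) (simp add: sum_distrib_left sum.swap[where A = "UNIV :: 'l set"]
          sum.swap[where B = "UNIV :: 'b set"])
    finally show ?thesis .
  qed
  obtain n where n: "T = Suc n" using T by (cases T) auto
  have "C n = 0"
    by (auto simp: C_def conv0_def n intro!: hist_sum_zero)
  have "(\<Sum>t<T. R t) = R 0 + (\<Sum>t<n. R (Suc t))"
    by (simp add: n sum.lessThan_Suc_shift del: sum.lessThan_Suc)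
  also have "(\<Sum>t<n. R (Suc t)) = (\<Sum>t<T. C t)"
    using R_Suc \<open>C n = 0\<close> by (simp add: n)
  finally have "(\<Sum>t<T. R t) = lp1_obj q u0 + (\<Sum>t<T. C t)"
    using R_0 by simp
  then show ?thesis
    by (simp add: lp1_slack_def plan_payoff_def right_diff_distrib sum_subtractf hist_sum_diff lhs
        sum.distrib R_def)
qed

lemma lp1_weak_duality:
  assumes "lp1_feasible T p M x u0 u" "realY T q y" "T \<ge> 1"
  shows "lp1_obj q u0 \<le> plan_payoff T M x y"
  using plan_payoff_eq_lp1_obj_plus_slack[OF assms(2,3), of M x u0 u] lp1_slack_nonneg[OF assms]
  by simp

text \<open>Backward induction for player 2's best reply to a plan \<open>x\<close> of player 1:
  \<open>resp_value M x n l hA hB\<close> is the least total payoff over the last \<open>n\<close> stages (weighted by \<open>x\<close>)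
  that player 2 of type \<open>l\<close> can achieve after the history \<open>(hA, hB)\<close>.\<close>

primrec resp_value ::
  "('k::finite \<Rightarrow> 'l \<Rightarrow> 'a::finite \<Rightarrow> 'b::finite \<Rightarrow> real) \<Rightarrow> ('k \<Rightarrow> 'a list \<Rightarrow> 'b list \<Rightarrow> 'a \<Rightarrow> real)
   \<Rightarrow> nat \<Rightarrow> 'l \<Rightarrow> 'a list \<Rightarrow> 'b list \<Rightarrow> real" where
  "resp_value M x 0 l hA hB = 0"
| "resp_value M x (Suc n) l hA hB = Min (range (\<lambda>b'. (\<Sum>k\<in>UNIV. \<Sum>a'\<in>UNIV. M k l a' b' * x k hA hB a')
      + (\<Sum>a'\<in>UNIV. resp_value M x n l (hA @ [a']) (hB @ [b']))))"

definition br_value where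
  "br_value T M x l hA hB = resp_value M x (T - length hA) l hA hB"

definition br_mult where
  "br_mult T M x = (\<lambda>l hA hB a b. br_value T M x l (hA @ [a]) (hB @ [b]))"

definition br_col where
  "br_col T M x l hA hB = arg_min_on (lp1_lhs T M x (br_mult T M x) l hA hB) UNIV"

lemma br_value_eq_Min:
  assumes "length hA < T"
  shows "br_value T M x l hA hB = Min (range (lp1_lhs T M x (br_mult T M x) l hA hB))"
proof -
  have "T - length hA = Suc (T - length (hA @ [a])) " for a :: 'a
    using assms by simp
  moreover have "conv0 T (br_mult T M x) l hA hB a b = br_value T M x l (hA @ [a]) (hB @ [b])" for a b
    using assms by (auto simp: conv0_def br_mult_def br_value_def)
  ultimately show ?thesis
    by (simp add: br_value_def lp1_lhs_def)
qed

lemma br_value_le: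
  "length hA < T \<Longrightarrow> br_value T M x l hA hB \<le> lp1_lhs T M x (br_mult T M x) l hA hB b'"
  by (simp add: br_value_eq_Min)

lemma lp1_lhs_br_col:
  "length hA < T \<Longrightarrow>
     lp1_lhs T M x (br_mult T M x) l hA hB (br_col T M x l hA hB) = br_value T M x l hA hB"
  unfolding br_value_eq_Min br_col_def by (rule Min_eqI[symmetric]) (auto intro: arg_min_least)

lemma lp1_rhs_br:
  assumes "length hA = length hB" "length hA < T"
  shows "lp1_rhs T (\<lambda>l. br_value T M x l [] []) (br_mult T M x) l hA hB = br_value T M x l hA hB"
  using assms
  by (cases hA rule: rev_cases; cases hB rule: rev_cases)
    (auto simp: lp1_rhs_def conv0_def br_mult_def br_value_def)

definition pure_plans2 :: "nat \<Rightarrow> ('l \<Rightarrow> real) \<Rightarrow> ('l \<Rightarrow> 'a::finite list \<Rightarrow> 'b::finite list \<Rightarrow> 'b \<Rightarrow> real) set" where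
  "pure_plans2 T q = {y. realY T q y \<and> (\<forall>l hA hB b. y l hA hB b \<in> {0, q l}) \<and>
     (\<forall>l hA hB b. \<not> (length hA = length hB \<and> length hA < T) \<longrightarrow> y l hA hB b = 0)}"

lemma finite_pure_plans2:
  "finite (pure_plans2 T (q :: 'l::finite \<Rightarrow> real) :: ('l \<Rightarrow> 'a::finite list \<Rightarrow> 'b::finite list \<Rightarrow> 'b \<Rightarrow> real) set)"
proof -
  define D where "D = (UNIV :: 'l set) \<times> {h :: 'a list. length h < T} \<times> {h :: 'b list. length h < T} \<times> (UNIV :: 'b set)"
  define F where "F = {f. \<forall>z. (z \<in> D \<longrightarrow> f z \<in> insert 0 (range q)) \<and> (z \<notin> D \<longrightarrow> f z = 0)}"
  define r :: "('l \<Rightarrow> 'a list \<Rightarrow> 'b list \<Rightarrow> 'b \<Rightarrow> real) \<Rightarrow> 'l \<times> 'a list \<times> 'b list \<times> 'b \<Rightarrow> real"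
    where "r y = (\<lambda>(l, hA, hB, b). y l hA hB b)" for y
  have "finite F"
    unfolding F_def by (intro finite_set_of_finite_funs) (auto simp: D_def)
  moreover have "r ` pure_plans2 T q \<subseteq> F"
    unfolding r_def D_def F_def pure_plans2_def by (fastforce simp: image_iff)
  ultimately have "finite (r ` pure_plans2 T q)"
    by (rule finite_subset[rotated])
  moreover have "inj_on r (pure_plans2 T q)"
    by (auto simp: inj_on_def r_def fun_eq_iff)
  ultimately show ?thesis
    by (rule finite_imageD)
qed

definition br_path where
  "br_path T M x l hA hB \<longleftrightarrow> (\<forall>s<length hB. hB ! s = br_col T M x l (take s hA) (take s hB))"

lemma br_path_Nil [simp]: "br_path T M x l hA []"
  by (simp add: br_path_def)

lemma br_path_snoc:
  "length hA = length hB \<Longrightarrow>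
     br_path T M x l (hA @ [a]) (hB @ [b]) \<longleftrightarrow> br_path T M x l hA hB \<and> b = br_col T M x l hA hB"
  by (auto simp: br_path_def nth_append less_Suc_eq)

definition br_plan where
  "br_plan T q M x l hA hB b = (if length hA = length hB \<and> length hA < T \<and> br_path T M x l hA hB
     \<and> b = br_col T M x l hA hB then q l else 0)"

lemma sum_if_eq_const: "(\<Sum>b\<in>(UNIV :: 'x::finite set). if P \<and> b = c then v else 0) = (if P then v else (0 :: real))"
  by (cases P) (simp_all add: sum.delta)

lemma br_plan_pure:
  assumes "\<forall>l. q l > 0" "T \<ge> 1"
  shows "br_plan T q M x \<in> pure_plans2 T q"
proof -
  have "realY T q (br_plan T q M x)"
    using assms
    by (auto simp: realY_def br_plan_def less_imp_le sum_if_eq_const br_path_snoc cong: conj_cong)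
  then show ?thesis
    by (auto simp: pure_plans2_def br_plan_def)
qed

lemma lp1_attained_by_pure_reply:
  assumes X: "realX T p x" and T: "T \<ge> 1" and q: "\<forall>l. q l > 0"
  shows "\<exists>y\<in>pure_plans2 T q. \<exists>u0 u. lp1_feasible T p M x u0 u \<and> lp1_obj q u0 = plan_payoff T M x y"
proof (intro bexI exI conjI)
  let ?c = "\<lambda>l. br_value T M x l [] []" and ?u = "br_mult T M x" and ?y = "br_plan T q M x"
  show feasible: "lp1_feasible T p M x ?c ?u"
    using X by (simp add: lp1_feasible_iff[OF T] lp1_rhs_br br_value_le)
  have "lp1_slack T M x ?c ?u ?y = 0"
    unfolding lp1_slack_def
    by (intro sum.neutral ballI hist_sum_zero)
      (auto simp: br_plan_def lp1_rhs_br lp1_lhs_br_col intro!: sum.neutral)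
  moreover show pure: "?y \<in> pure_plans2 T q"
    by (rule br_plan_pure[OF q T])
  ultimately show "lp1_obj q ?c = plan_payoff T M x ?y"
    using plan_payoff_eq_lp1_obj_plus_slack[OF _ T, of q ?y M x ?c ?u] by (simp add: pure_plans2_def)
qed

lemma pure_best_reply2:
  assumes "realX T p x" "T \<ge> 1" "\<forall>l. q l > 0"
  shows "\<exists>y\<in>pure_plans2 T q. \<forall>y'. realY T q y' \<longrightarrow> plan_payoff T M x y \<le> plan_payoff T M x y'"
  using lp1_attained_by_pure_reply[OF assms, of M] lp1_weak_duality[OF _ _ assms(2)] by metis

section \<open>The game in realization plans has a value\<close>

text \<open>In the dual game player 2 maximises the negated payoff, so results about player 1 transfer
  to player 2.\<close>

definition swap_hist :: "('i \<Rightarrow> 'x \<Rightarrow> 'y \<Rightarrow> 'c) \<Rightarrow> 'i \<Rightarrow> 'y \<Rightarrow> 'x \<Rightarrow> 'c" where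
  "swap_hist f i v u = f i u v"

definition dual_game :: "('k \<Rightarrow> 'l \<Rightarrow> 'a \<Rightarrow> 'b \<Rightarrow> real) \<Rightarrow> 'l \<Rightarrow> 'k \<Rightarrow> 'b \<Rightarrow> 'a \<Rightarrow> real" where
  "dual_game M l k b a = - M k l a b"

lemma swap_hist_swap_hist [simp]: "swap_hist (swap_hist f) = f"
  by (simp add: swap_hist_def fun_eq_iff)

lemma realX_swap_hist: "realX T p (swap_hist y) \<longleftrightarrow> realY T p y"
  by (auto simp: realX_def realY_def swap_hist_def)

lemma realY_swap_hist: "realY T p (swap_hist x) \<longleftrightarrow> realX T p x"
  using realX_swap_hist[of T p "swap_hist x"] by simp

lemma plan_payoff_dual:
  fixes M :: "'k::finite \<Rightarrow> 'l::finite \<Rightarrow> 'a::finite \<Rightarrow> 'b::finite \<Rightarrow> real"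
  shows "plan_payoff T M x y = - plan_payoff T (dual_game M) (swap_hist y) (swap_hist x)"
proof -
  have "stage_payoff (dual_game M) (swap_hist y) (swap_hist x) hB hA = - stage_payoff M x y hA hB"
    for hA hB
    unfolding stage_payoff_def dual_game_def swap_hist_def sum_negf[symmetric]
    by (subst sum.swap[where A = "UNIV :: 'l set"], rule sum.cong[OF refl], rule sum.cong[OF refl],
        subst sum.swap[where A = "UNIV :: 'b set"]) (simp add: mult_ac)
  then have "stage_payoff (dual_game M) (swap_hist y) (swap_hist x) = (\<lambda>hB hA. - stage_payoff M x y hA hB)"
    by (intro ext)
  then have "hist_sum t (stage_payoff (dual_game M) (swap_hist y) (swap_hist x))
      = - hist_sum t (stage_payoff M x y)" for t
    using hist_sum_swap[of t "\<lambda>hA hB. - stage_payoff M x y hA hB"] by (simp add: hist_sum_minus)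
  then show ?thesis
    by (simp add: plan_payoff_def sum_negf)
qed

lemma pure_best_reply1:
  assumes Y: "realY T q y" and T: "T \<ge> 1" and p: "\<forall>k. p k > 0"
  shows "\<exists>x\<in>swap_hist ` pure_plans2 T p. \<forall>x'. realX T p x' \<longrightarrow> plan_payoff T M x' y \<le> plan_payoff T M x y"
proof -
  obtain y' where "y' \<in> pure_plans2 T p"
    and best: "\<forall>x'. realY T p x' \<longrightarrow>
      plan_payoff T (dual_game M) (swap_hist y) y' \<le> plan_payoff T (dual_game M) (swap_hist y) x'"
    using pure_best_reply2[of T q "swap_hist y" p "dual_game M"] Y T p
    by (auto simp: realX_swap_hist)
  have "plan_payoff T M x' y \<le> plan_payoff T M (swap_hist y') y" if "realX T p x'" for x'
    using best that plan_payoff_dual[of T M x' y] plan_payoff_dual[of T M "swap_hist y'" y]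
    by (simp add: realY_swap_hist)
  then show ?thesis
    using \<open>y' \<in> pure_plans2 T p\<close> by blast
qed

definition saddle_point where
  "saddle_point T p q M x y v \<longleftrightarrow> realX T p x \<and> realY T q y \<and>
     (\<forall>y'. realY T q y' \<longrightarrow> v \<le> plan_payoff T M x y') \<and>
     (\<forall>x'. realX T p x' \<longrightarrow> plan_payoff T M x' y \<le> v)"

lemma plan_game_saddle_point:
  fixes M :: "'k::finite \<Rightarrow> 'l::finite \<Rightarrow> 'a::finite \<Rightarrow> 'b::finite \<Rightarrow> real"
  assumes T: "T \<ge> 1" and p: "\<forall>k. p k > 0" and q: "\<forall>l. q l > 0"
  shows "\<exists>x y v. saddle_point T p q M x y v"
proof -
  define PX :: "('k \<Rightarrow> 'a list \<Rightarrow> 'b list \<Rightarrow> 'a \<Rightarrow> real) set" where "PX = swap_hist ` pure_plans2 T p"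
  define PY :: "('l \<Rightarrow> 'a list \<Rightarrow> 'b list \<Rightarrow> 'b \<Rightarrow> real) set" where "PY = pure_plans2 T q"
  have fin: "finite PX" "finite PY"
    by (simp_all add: PX_def PY_def finite_pure_plans2)
  have plans: "\<forall>x\<in>PX. realX T p x" "\<forall>y\<in>PY. realY T q y"
    by (auto simp: PX_def PY_def pure_plans2_def realX_swap_hist)
  have "PX \<noteq> {}" "PY \<noteq> {}"
    using br_plan_pure[OF p T, of "dual_game M" "\<lambda>_ _ _ _. 0"] br_plan_pure[OF q T, of M "\<lambda>_ _ _ _. 0"]
    by (auto simp: PX_def PY_def)
  with fin obtain \<pi> \<rho> v where mix: "is_mixture PX \<pi>" "is_mixture PY \<rho>"
    and v: "\<forall>y\<in>PY. v \<le> (\<Sum>x\<in>PX. \<pi> x * plan_payoff T M x y)"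
      "\<forall>x\<in>PX. (\<Sum>y\<in>PY. plan_payoff T M x y * \<rho> y) \<le> v"
    using minimax_matrix[of PX PY "plan_payoff T M"] by blast
  define xs where "xs = (\<lambda>k hA hB a. \<Sum>x\<in>PX. \<pi> x * x k hA hB a)"
  define ys where "ys = (\<lambda>l hA hB b. \<Sum>y\<in>PY. \<rho> y * y l hA hB b)"
  have X: "realX T p xs" and Y: "realY T q ys"
    unfolding xs_def ys_def using fin plans mix by (auto intro: realX_mix realY_mix)
  have "saddle_point T p q M xs ys v"
    unfolding saddle_point_def
  proof (intro conjI allI impI X Y)
    fix y :: "'l \<Rightarrow> 'a list \<Rightarrow> 'b list \<Rightarrow> 'b \<Rightarrow> real" assume "realY T q y"
    obtain y' where "y' \<in> PY" "plan_payoff T M xs y' \<le> plan_payoff T M xs y"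
      using pure_best_reply2[OF X T q, where M = M] \<open>realY T q y\<close> unfolding PY_def by blast
    then show "v \<le> plan_payoff T M xs y"
      using v(1) fin by (force simp: xs_def plan_payoff_mix_left)
  next
    fix x :: "'k \<Rightarrow> 'a list \<Rightarrow> 'b list \<Rightarrow> 'a \<Rightarrow> real" assume "realX T p x"
    obtain x' where "x' \<in> PX" "plan_payoff T M x ys \<le> plan_payoff T M x' ys"
      using pure_best_reply1[OF Y T p, where M = M] \<open>realX T p x\<close> unfolding PX_def by blast
    then show "plan_payoff T M x ys \<le> v"
      using v(2) fin by (force simp: ys_def plan_payoff_mix_right mult.commute)
  qed
  then show ?thesis by blast
qed

lemma saddle_point_dual:
  fixes M :: "'k::finite \<Rightarrow> 'l::finite \<Rightarrow> 'a::finite \<Rightarrow> 'b::finite \<Rightarrow> real"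
  assumes "saddle_point T p q M x y v"
  shows "saddle_point T q p (dual_game M) (swap_hist y) (swap_hist x) (- v)"
  unfolding saddle_point_def
proof (intro conjI allI impI)
  show "realX T q (swap_hist y)" "realY T p (swap_hist x)"
    using assms by (simp_all add: saddle_point_def realX_swap_hist realY_swap_hist)
next
  fix y' :: "'k \<Rightarrow> 'b list \<Rightarrow> 'a list \<Rightarrow> 'a \<Rightarrow> real" assume "realY T p y'"
  then have "plan_payoff T M (swap_hist y') y \<le> v"
    using assms by (simp add: saddle_point_def realX_swap_hist)
  then show "- v \<le> plan_payoff T (dual_game M) (swap_hist y) y'"
    using plan_payoff_dual[of T M "swap_hist y'" y] by simp
next
  fix x' :: "'l \<Rightarrow> 'b list \<Rightarrow> 'a list \<Rightarrow> 'b \<Rightarrow> real" assume "realX T q x'"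
  then have "v \<le> plan_payoff T M x (swap_hist x')"
    using assms by (simp add: saddle_point_def realY_swap_hist)
  then show "plan_payoff T (dual_game M) x' (swap_hist x) \<le> - v"
    using plan_payoff_dual[of T M x "swap_hist x'"] by simp
qed

section \<open>Behaviour strategies and realization plans\<close>

lemma behav1_distr:
  "\<sigma> \<in> behav1 T \<Longrightarrow> length hA = length hB \<Longrightarrow> length hA < T \<Longrightarrow> is_distr (\<sigma> (Suc (length hA)) k hA hB)"
  by (simp add: behav1_def)

lemma behav2_distr:
  "\<tau> \<in> behav2 T \<Longrightarrow> length hA = length hB \<Longrightarrow> length hA < T \<Longrightarrow> is_distr (\<tau> (Suc (length hA)) l hA hB)"
  by (simp add: behav2_def)

definition plan_of_behav :: "('k \<Rightarrow> real) \<Rightarrow> (nat \<Rightarrow> 'k \<Rightarrow> 'a list \<Rightarrow> 'b list \<Rightarrow> 'a \<Rightarrow> real)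
   \<Rightarrow> 'k \<Rightarrow> 'a list \<Rightarrow> 'b list \<Rightarrow> 'a \<Rightarrow> real" where
  "plan_of_behav p \<sigma> k hA hB a = p k * (\<Prod>s<length hA. \<sigma> (Suc s) k (take s hA) (take s hB) (hA ! s))
     * \<sigma> (Suc (length hA)) k hA hB a"

lemma plan_of_behav_snoc:
  assumes "length hA = length hB"
  shows "plan_of_behav p \<sigma> k (hA @ [a']) (hB @ [b']) a
     = plan_of_behav p \<sigma> k hA hB a' * \<sigma> (Suc (Suc (length hA))) k (hA @ [a']) (hB @ [b']) a"
proof -
  have "(\<Prod>s<length hA. \<sigma> (Suc s) k (take s (hA @ [a'])) (take s (hB @ [b'])) ((hA @ [a']) ! s))
      = (\<Prod>s<length hA. \<sigma> (Suc s) k (take s hA) (take s hB) (hA ! s))"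
    using assms by (intro prod.cong) (auto simp: nth_append)
  then show ?thesis
    using assms by (simp add: plan_of_behav_def nth_append mult_ac)
qed

lemma realX_plan_of_behav:
  fixes \<sigma> :: "nat \<Rightarrow> 'k \<Rightarrow> 'a::finite list \<Rightarrow> 'b::finite list \<Rightarrow> 'a \<Rightarrow> real"
  assumes \<sigma>: "\<sigma> \<in> behav1 T" and p: "\<forall>k. p k > 0" and T: "T \<ge> 1"
  shows "realX T p (plan_of_behav p \<sigma>)"
  unfolding realX_def
proof (intro conjI allI impI)
  fix k and hA :: "'a list" and hB :: "'b list" and a
  assume h: "length hA = length hB \<and> length hA < T"
  have "0 \<le> \<sigma> (Suc s) k (take s hA) (take s hB) c" if "s < length hA" for s c
    using behav1_distr[OF \<sigma>, of "take s hA" "take s hB" k] h that by (simp add: is_distr_def)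
  then show "0 \<le> plan_of_behav p \<sigma> k hA hB a"
    using behav1_distr[OF \<sigma>, of hA hB k] h p
    by (auto simp: plan_of_behav_def is_distr_def less_imp_le intro!: mult_nonneg_nonneg prod_nonneg)
next
  fix k show "sum (plan_of_behav p \<sigma> k [] []) UNIV = p k"
    using behav1_distr[OF \<sigma>, of "[]" "[]" k] T
    by (simp add: plan_of_behav_def is_distr_def sum_distrib_left[symmetric])
next
  fix k and hA :: "'a list" and hB :: "'b list" and a b
  assume h: "length hA = length hB \<and> length hA + 1 < T"
  then show "sum (plan_of_behav p \<sigma> k (hA @ [a]) (hB @ [b])) UNIV = plan_of_behav p \<sigma> k hA hB a"
    using behav1_distr[OF \<sigma>, of "hA @ [a]" "hB @ [b]" k]
    by (simp add: plan_of_behav_snoc is_distr_def sum_distrib_left[symmetric])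
qed

lemma plan_of_behav_induced:
  assumes X: "realX T p x" and I: "induced1 T p x \<sigma>" and p: "\<forall>k. p k > 0"
  shows "length hA = length hB \<Longrightarrow> length hA < T \<Longrightarrow> plan_of_behav p \<sigma> k hA hB a = x k hA hB a"
proof (induction hA arbitrary: hB a rule: rev_induct)
  case Nil
  then show ?case
    using I p by (simp add: induced1_def plan_of_behav_def less_imp_neq[symmetric])
next
  case (snoc a' h)
  then obtain h' b' where hB: "hB = h' @ [b']" and len: "length h = length h'"
    by (cases hB rule: rev_cases) auto
  have IH: "plan_of_behav p \<sigma> k h h' a' = x k h h' a'"
    using snoc len by simp
  show ?case
  proof (cases "x k h h' a' = 0")
    case False
    then show ?thesis
      using I len snoc.prems(2) IH
      by (simp add: hB plan_of_behav_snoc induced1_def numeral_2_eq_2)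
  next
    case True
    have "x k (h @ [a']) (h' @ [b']) a = 0"
      using sum_nonneg_eq_0_iff[of UNIV "x k (h @ [a']) (h' @ [b'])"] X True len snoc.prems(2)
      by (simp add: realX_def)
    then show ?thesis
      using True IH len by (simp add: hB plan_of_behav_snoc)
  qed
qed

text \<open>After histories of probability zero, where \<open>induced1\<close> leaves the strategy unconstrained,
  the uniform distribution is played.\<close>

definition behav_of_plan :: "('k \<Rightarrow> real) \<Rightarrow> ('k \<Rightarrow> 'a::finite list \<Rightarrow> 'b list \<Rightarrow> 'a \<Rightarrow> real)
   \<Rightarrow> nat \<Rightarrow> 'k \<Rightarrow> 'a list \<Rightarrow> 'b list \<Rightarrow> 'a \<Rightarrow> real" where
  "behav_of_plan p x t k hA hB a = (if t = 1 then x k [] [] a / p k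
     else if hA \<noteq> [] \<and> x k (butlast hA) (butlast hB) (last hA) \<noteq> 0
       then x k hA hB a / x k (butlast hA) (butlast hB) (last hA)
     else 1 / real (card (UNIV :: 'a set)))"

lemma uniform_distr: "is_distr (\<lambda>a :: 'a::finite. 1 / real (card (UNIV :: 'a set)))"
  by (simp add: is_distr_def)

lemma behav_of_plan_induced: "induced1 T p x (behav_of_plan p x)"
  by (simp add: induced1_def behav_of_plan_def)

lemma behav_of_plan_behav1:
  fixes x :: "'k \<Rightarrow> 'a::finite list \<Rightarrow> 'b::finite list \<Rightarrow> 'a \<Rightarrow> real"
  assumes X: "realX T p x" and p: "\<forall>k. p k > 0"
  shows "behav_of_plan p x \<in> behav1 T"
  unfolding behav1_def
proof (intro CollectI ballI allI impI)
  fix t k and hA :: "'a list" and hB :: "'b list"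
  assume t: "t \<in> {1..T}" and len: "length hA = t - 1 \<and> length hB = t - 1"
  have ratio_distr: "is_distr (\<lambda>a. x k hA hB a / c)" if "sum (x k hA hB) UNIV = c" "c > 0" for c
    using that X len t by (auto simp: is_distr_def realX_def sum_divide_distrib[symmetric])
  show "is_distr (behav_of_plan p x t k hA hB)"
  proof (cases "t = 1")
    case True
    moreover have "sum (x k [] []) UNIV = p k"
      using X by (simp add: realX_def)
    ultimately show ?thesis
      using ratio_distr[of "p k"] p len by (simp add: behav_of_plan_def[abs_def])
  next
    case False
    then obtain h a' h' b' where hA: "hA = h @ [a']" and hB: "hB = h' @ [b']"
      using len t by (cases hA rule: rev_cases; cases hB rule: rev_cases) auto
    have "sum (x k hA hB) UNIV = x k h h' a'" "0 \<le> x k h h' a'"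
      using X len t False by (auto simp: hA hB realX_def)
    then show ?thesis
      using ratio_distr[of "x k h h' a'"] False uniform_distr
      by (cases "x k h h' a' = 0") (simp_all add: behav_of_plan_def[abs_def] hA hB)
  qed
qed

definition plan_of_behav2 :: "('l \<Rightarrow> real) \<Rightarrow> (nat \<Rightarrow> 'l \<Rightarrow> 'a list \<Rightarrow> 'b list \<Rightarrow> 'b \<Rightarrow> real)
   \<Rightarrow> 'l \<Rightarrow> 'a list \<Rightarrow> 'b list \<Rightarrow> 'b \<Rightarrow> real" where
  "plan_of_behav2 q \<tau> l hA hB b = q l * (\<Prod>s<length hB. \<tau> (Suc s) l (take s hA) (take s hB) (hB ! s))
     * \<tau> (Suc (length hB)) l hA hB b"

definition play_weight where
  "play_weight \<sigma> \<tau> k l hA hB n = (\<Prod>s<n. \<sigma> (Suc s) k (take s hA) (take s hB) (hA ! s)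
     * \<tau> (Suc s) l (take s hA) (take s hB) (hB ! s))"

lemma play_weight_snoc:
  assumes "length hA = n" "length hB = n"
  shows "play_weight \<sigma> \<tau> k l (hA @ [a]) (hB @ [b]) (Suc n)
     = play_weight \<sigma> \<tau> k l hA hB n * (\<sigma> (Suc n) k hA hB a * \<tau> (Suc n) l hA hB b)"
proof -
  have "play_weight \<sigma> \<tau> k l (hA @ [a]) (hB @ [b]) n = play_weight \<sigma> \<tau> k l hA hB n"
    using assms unfolding play_weight_def by (intro prod.cong) (auto simp: nth_append)
  then show ?thesis
    using assms by (simp add: play_weight_def nth_append)
qed

text \<open>Summing out the stages after \<open>t\<close> leaves the weight of the first \<open>t\<close> stages, because
  behaviour strategies put total mass one on the actions at every stage.\<close>

lemma hist_sum_play_weight_marginal: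
  fixes \<sigma> :: "nat \<Rightarrow> 'k \<Rightarrow> 'a::finite list \<Rightarrow> 'b::finite list \<Rightarrow> 'a \<Rightarrow> real"
  assumes \<sigma>: "\<sigma> \<in> behav1 T" and \<tau>: "\<tau> \<in> behav2 T" and "t + n \<le> T"
  shows "hist_sum (t + n) (\<lambda>hA hB. play_weight \<sigma> \<tau> k l hA hB (t + n) * f (take t hA) (take t hB))
     = hist_sum t (\<lambda>hA hB. play_weight \<sigma> \<tau> k l hA hB t * f hA hB)"
  using assms(3)
proof (induction n)
  case (Suc n)
  have "hist_sum (Suc (t + n)) (\<lambda>hA hB. play_weight \<sigma> \<tau> k l hA hB (Suc (t + n)) * f (take t hA) (take t hB))
      = hist_sum (t + n) (\<lambda>hA hB. play_weight \<sigma> \<tau> k l hA hB (t + n) * f (take t hA) (take t hB))"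
    unfolding hist_sum_Suc
  proof (rule hist_sum_cong)
    fix hA :: "'a list" and hB :: "'b list" assume len: "length hA = t + n" "length hB = t + n"
    have "is_distr (\<sigma> (Suc (t + n)) k hA hB)" "is_distr (\<tau> (Suc (t + n)) l hA hB)"
      using behav1_distr[OF \<sigma>, of hA hB k] behav2_distr[OF \<tau>, of hA hB l] len Suc.prems by simp_all
    then show "(\<Sum>a\<in>UNIV. \<Sum>b\<in>UNIV. play_weight \<sigma> \<tau> k l (hA @ [a]) (hB @ [b]) (Suc (t + n))
        * f (take t (hA @ [a])) (take t (hB @ [b])))
      = play_weight \<sigma> \<tau> k l hA hB (t + n) * f (take t hA) (take t hB)"
      using len
      by (simp add: play_weight_snoc is_distr_def sum_distrib_left[symmetric] sum_distrib_right[symmetric]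
          mult_ac)
  qed
  with Suc show ?case by simp
qed (auto intro: hist_sum_cong)

lemma expected_total_payoff:
  assumes \<sigma>: "\<sigma> \<in> behav1 T" and \<tau>: "\<tau> \<in> behav2 T"
  shows "hist_sum T (\<lambda>hA hB. play_weight \<sigma> \<tau> k l hA hB T * (\<Sum>s<T. M k l (hA ! s) (hB ! s)))
    = (\<Sum>s<T. hist_sum s (\<lambda>hA hB. \<Sum>a\<in>UNIV. \<Sum>b\<in>UNIV. play_weight \<sigma> \<tau> k l hA hB s
        * (\<sigma> (Suc s) k hA hB a * \<tau> (Suc s) l hA hB b) * M k l a b))"
proof -
  have "hist_sum T (\<lambda>hA hB. play_weight \<sigma> \<tau> k l hA hB T * M k l (hA ! s) (hB ! s))
      = hist_sum s (\<lambda>hA hB. \<Sum>a\<in>UNIV. \<Sum>b\<in>UNIV. play_weight \<sigma> \<tau> k l hA hB s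
        * (\<sigma> (Suc s) k hA hB a * \<tau> (Suc s) l hA hB b) * M k l a b)" if "s < T" for s
  proof -
    have "hist_sum T (\<lambda>hA hB. play_weight \<sigma> \<tau> k l hA hB T * M k l (hA ! s) (hB ! s))
      = hist_sum (Suc s + (T - Suc s)) (\<lambda>hA hB. play_weight \<sigma> \<tau> k l hA hB (Suc s + (T - Suc s))
          * M k l (take (Suc s) hA ! s) (take (Suc s) hB ! s))"
      using that by simp
    also have "\<dots> = hist_sum (Suc s) (\<lambda>hA hB. play_weight \<sigma> \<tau> k l hA hB (Suc s) * M k l (hA ! s) (hB ! s))"
      using that by (intro hist_sum_play_weight_marginal[OF \<sigma> \<tau>]) simp
    finally show ?thesis
      by (simp add: hist_sum_Suc play_weight_snoc nth_append cong: hist_sum_cong)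
  qed
  then show ?thesis
    by (simp add: sum_distrib_left hist_sum_sum)
qed

lemma sum_swap3: "(\<Sum>i\<in>A. \<Sum>j\<in>B. \<Sum>k\<in>C. f i j k) = (\<Sum>k\<in>C. \<Sum>i\<in>A. \<Sum>j\<in>B. f i j k)"
  by (subst sum.swap[where A = B]) (rule sum.swap)

lemma gamma_eq_plan_payoff:
  assumes \<sigma>: "\<sigma> \<in> behav1 T" and \<tau>: "\<tau> \<in> behav2 T"
  shows "gamma T p q M \<sigma> \<tau> = plan_payoff T M (plan_of_behav p \<sigma>) (plan_of_behav2 q \<tau>)"
proof -
  define F where "F k l s hA hB = (\<Sum>a\<in>UNIV. \<Sum>b\<in>UNIV. play_weight \<sigma> \<tau> k l hA hB s
      * (\<sigma> (Suc s) k hA hB a * \<tau> (Suc s) l hA hB b) * M k l a b)" for k l s hA hB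
  have "gamma T p q M \<sigma> \<tau> = (\<Sum>k\<in>UNIV. \<Sum>l\<in>UNIV. p k * q l *
      hist_sum T (\<lambda>hA hB. play_weight \<sigma> \<tau> k l hA hB T * (\<Sum>s<T. M k l (hA ! s) (hB ! s))))"
    by (simp add: gamma_def hist_sum_def play_weight_def sum_distrib_left mult.assoc)
  also have "\<dots> = (\<Sum>k\<in>UNIV. \<Sum>l\<in>UNIV. p k * q l * (\<Sum>s<T. hist_sum s (F k l s)))"
    by (simp only: expected_total_payoff[OF \<sigma> \<tau>] F_def[abs_def])
  also have "\<dots> = (\<Sum>k\<in>UNIV. \<Sum>l\<in>UNIV. \<Sum>s<T. hist_sum s (\<lambda>hA hB. p k * q l * F k l s hA hB))"
    by (simp only: sum_distrib_left hist_sum_mult)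
  also have "\<dots> = (\<Sum>s<T. hist_sum s (\<lambda>hA hB. \<Sum>k\<in>UNIV. \<Sum>l\<in>UNIV. p k * q l * F k l s hA hB))"
    unfolding hist_sum_sum by (rule sum_swap3)
  also have "\<dots> = plan_payoff T M (plan_of_behav p \<sigma>) (plan_of_behav2 q \<tau>)"
    unfolding plan_payoff_def F_def
    by (intro sum.cong refl hist_sum_cong)
      (simp add: stage_payoff_def plan_of_behav_def plan_of_behav2_def play_weight_def prod.distrib
        sum_distrib_left mult_ac)
  finally show ?thesis .
qed

definition swap_strat :: "(nat \<Rightarrow> 'i \<Rightarrow> 'x \<Rightarrow> 'y \<Rightarrow> 'c) \<Rightarrow> nat \<Rightarrow> 'i \<Rightarrow> 'y \<Rightarrow> 'x \<Rightarrow> 'c" where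
  "swap_strat \<sigma> t = swap_hist (\<sigma> t)"

lemma swap_strat_swap_strat [simp]: "swap_strat (swap_strat \<sigma>) = \<sigma>"
  by (simp add: swap_strat_def fun_eq_iff)

lemma behav2_iff_swap: "\<tau> \<in> behav2 T \<longleftrightarrow> swap_strat \<tau> \<in> behav1 T"
  by (auto simp: behav1_def behav2_def swap_strat_def swap_hist_def[abs_def])

lemma behav2_eq_swap_behav1: "behav2 T = swap_strat ` behav1 T"
proof
  show "behav2 T \<subseteq> swap_strat ` behav1 T"
  proof
    fix \<tau> assume "\<tau> \<in> behav2 T"
    then show "\<tau> \<in> swap_strat ` behav1 T"
      using behav2_iff_swap[of \<tau> T] by (metis image_eqI swap_strat_swap_strat)
  qed
qed (auto simp: behav2_iff_swap)

lemma behav1_eq_swap_behav2: "behav1 T = swap_strat ` behav2 T"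
  by (simp add: behav2_eq_swap_behav1 image_image)

lemma plan_of_behav2_eq: "plan_of_behav2 q \<tau> = swap_hist (plan_of_behav q (swap_strat \<tau>))"
  by (simp add: fun_eq_iff plan_of_behav_def plan_of_behav2_def swap_strat_def swap_hist_def)

lemma realY_plan_of_behav2:
  fixes \<tau> :: "nat \<Rightarrow> 'l \<Rightarrow> 'a::finite list \<Rightarrow> 'b::finite list \<Rightarrow> 'b \<Rightarrow> real"
  assumes "\<tau> \<in> behav2 T" "\<forall>l. q l > 0" "T \<ge> 1"
  shows "realY T q (plan_of_behav2 q \<tau>)"
  unfolding plan_of_behav2_eq realY_swap_hist
  using assms by (intro realX_plan_of_behav) (simp_all add: behav2_iff_swap)

lemma induced2_iff_swap: "induced2 T q y \<tau> \<longleftrightarrow> induced1 T q (swap_hist y) (swap_strat \<tau>)"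
  unfolding induced1_def induced2_def swap_hist_def swap_strat_def
  by (auto simp del: One_nat_def) (metis One_nat_def)+

lemma gamma_dual:
  fixes M :: "'k::finite \<Rightarrow> 'l::finite \<Rightarrow> 'a::finite \<Rightarrow> 'b::finite \<Rightarrow> real"
  assumes "\<sigma> \<in> behav1 T" "\<tau> \<in> behav2 T"
  shows "gamma T p q M \<sigma> \<tau> = - gamma T q p (dual_game M) (swap_strat \<tau>) (swap_strat \<sigma>)"
proof -
  have "swap_strat \<tau> \<in> behav1 T" "swap_strat \<sigma> \<in> behav2 T"
    using assms by (simp_all add: behav2_iff_swap)
  moreover have "plan_of_behav q (swap_strat \<tau>) = swap_hist (plan_of_behav2 q \<tau>)"
    "plan_of_behav2 p (swap_strat \<sigma>) = swap_hist (plan_of_behav p \<sigma>)"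
    by (simp_all add: plan_of_behav2_eq)
  ultimately show ?thesis
    using assms by (simp add: gamma_eq_plan_payoff plan_payoff_dual[of T M])
qed

lemma INF_real_uminus: "(INF x\<in>A. - f x) = - (SUP x\<in>A. f x :: real)"
  by (simp add: Inf_real_def image_image)

lemma SUP_real_uminus: "(SUP x\<in>A. - f x) = - (INF x\<in>A. f x :: real)"
  by (simp add: Inf_real_def image_image)

lemma val_minmax_dual:
  fixes M :: "'k::finite \<Rightarrow> 'l::finite \<Rightarrow> 'a::finite \<Rightarrow> 'b::finite \<Rightarrow> real"
  shows "val_minmax T p q M = - val_maxmin T q p (dual_game M)"
proof -
  have B1: "(behav1 T :: (nat \<Rightarrow> 'l \<Rightarrow> 'b list \<Rightarrow> 'a list \<Rightarrow> 'b \<Rightarrow> real) set) = swap_strat ` behav2 T"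
    and B2: "(behav2 T :: (nat \<Rightarrow> 'k \<Rightarrow> 'b list \<Rightarrow> 'a list \<Rightarrow> 'a \<Rightarrow> real) set) = swap_strat ` behav1 T"
    by (rule behav1_eq_swap_behav2 behav2_eq_swap_behav1)+
  have "val_maxmin T q p (dual_game M)
      = (SUP \<tau>\<in>behav2 T. INF \<sigma>\<in>behav1 T. gamma T q p (dual_game M) (swap_strat \<tau>) (swap_strat \<sigma>))"
    unfolding val_maxmin_def B1 B2 image_image ..
  also have "\<dots> = (SUP \<tau>\<in>behav2 T. INF \<sigma>\<in>behav1 T. - gamma T p q M \<sigma> \<tau>)"
    by (intro SUP_cong INF_cong refl) (simp add: gamma_dual)
  finally show ?thesis
    by (simp add: val_minmax_def INF_real_uminus SUP_real_uminus)
qed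

lemma security2_iff_dual:
  fixes M :: "'k::finite \<Rightarrow> 'l::finite \<Rightarrow> 'a::finite \<Rightarrow> 'b::finite \<Rightarrow> real"
  shows "security2 T p q M \<tau> \<longleftrightarrow> security1 T q p (dual_game M) (swap_strat \<tau>)"
proof -
  have B2: "(behav2 T :: (nat \<Rightarrow> 'k \<Rightarrow> 'b list \<Rightarrow> 'a list \<Rightarrow> 'a \<Rightarrow> real) set) = swap_strat ` behav1 T"
    by (rule behav2_eq_swap_behav1)
  have "(INF \<sigma>\<in>behav2 T. gamma T q p (dual_game M) (swap_strat \<tau>) \<sigma>)
      = (INF \<sigma>\<in>behav1 T. - gamma T p q M \<sigma> \<tau>)" if "\<tau> \<in> behav2 T"
    unfolding B2 image_image using that by (intro INF_cong refl) (simp add: gamma_dual)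
  then show ?thesis
    by (auto simp: security1_def security2_def behav2_iff_swap[symmetric] val_minmax_dual
        INF_real_uminus)
qed

section \<open>Value and security strategies\<close>

lemma exists_behav2_realizing:
  fixes y :: "'l \<Rightarrow> 'a::finite list \<Rightarrow> 'b::finite list \<Rightarrow> 'b \<Rightarrow> real"
  assumes Y: "realY T q y" and q: "\<forall>l. q l > 0"
  shows "\<exists>\<tau>\<in>behav2 T. \<forall>l hA hB b. length hA = length hB \<longrightarrow> length hA < T \<longrightarrow>
    plan_of_behav2 q \<tau> l hA hB b = y l hA hB b"
proof -
  let ?\<sigma> = "behav_of_plan q (swap_hist y)"
  have X: "realX T q (swap_hist y)"
    using Y by (simp add: realX_swap_hist)
  have "swap_strat ?\<sigma> \<in> behav2 T"
    using behav_of_plan_behav1[OF X q] by (simp add: behav2_iff_swap)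
  moreover have "plan_of_behav2 q (swap_strat ?\<sigma>) l hA hB b = y l hA hB b"
    if "length hA = length hB" "length hA < T" for l hA hB b
    using plan_of_behav_induced[OF X behav_of_plan_induced q, of hB hA l b] that
    by (simp add: plan_of_behav2_eq swap_hist_def)
  ultimately show ?thesis by blast
qed

lemma gamma_bdd_below:
  fixes M :: "'k::finite \<Rightarrow> 'l::finite \<Rightarrow> 'a::finite \<Rightarrow> 'b::finite \<Rightarrow> real"
  assumes \<sigma>: "\<sigma> \<in> behav1 T" and T: "T \<ge> 1" and p: "\<forall>k. p k > 0" and q: "\<forall>l. q l > 0"
  shows "bdd_below (gamma T p q M \<sigma> ` behav2 T)"
proof -
  have X: "realX T p (plan_of_behav p \<sigma>)"
    by (rule realX_plan_of_behav[OF \<sigma> p T])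
  obtain u0 u where "lp1_feasible T p M (plan_of_behav p \<sigma>) u0 u"
    using lp1_attained_by_pure_reply[OF X T q, of M] by blast
  then have "lp1_obj q u0 \<le> gamma T p q M \<sigma> \<tau>" if "\<tau> \<in> behav2 T" for \<tau>
    using lp1_weak_duality[OF _ realY_plan_of_behav2[OF that q T] T] gamma_eq_plan_payoff[OF \<sigma> that]
    by simp
  then show ?thesis
    by (rule bdd_belowI2)
qed

lemma gamma_induced_guarantee:
  fixes M :: "'k::finite \<Rightarrow> 'l::finite \<Rightarrow> 'a::finite \<Rightarrow> 'b::finite \<Rightarrow> real"
  assumes X: "realX T p x" and I: "induced1 T p x \<sigma>" and \<sigma>: "\<sigma> \<in> behav1 T"
    and T: "T \<ge> 1" and p: "\<forall>k. p k > 0" and q: "\<forall>l. q l > 0"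
    and guarantee: "\<forall>y. realY T q y \<longrightarrow> c \<le> plan_payoff T M x y"
  shows "\<forall>\<tau>\<in>behav2 T. c \<le> gamma T p q M \<sigma> \<tau>"
proof
  fix \<tau> :: "nat \<Rightarrow> 'l \<Rightarrow> 'a list \<Rightarrow> 'b list \<Rightarrow> 'b \<Rightarrow> real" assume \<tau>: "\<tau> \<in> behav2 T"
  have "gamma T p q M \<sigma> \<tau> = plan_payoff T M x (plan_of_behav2 q \<tau>)"
    unfolding gamma_eq_plan_payoff[OF \<sigma> \<tau>] by (rule plan_payoff_cong) (simp_all add: plan_of_behav_induced[OF X I p])
  then show "c \<le> gamma T p q M \<sigma> \<tau>"
    using guarantee realY_plan_of_behav2[OF \<tau> q T] by simp
qed

lemma INF_gamma_le_saddle_value: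
  fixes M :: "'k::finite \<Rightarrow> 'l::finite \<Rightarrow> 'a::finite \<Rightarrow> 'b::finite \<Rightarrow> real"
  assumes S: "saddle_point T p q M xs ys v" and \<sigma>: "\<sigma> \<in> behav1 T"
    and T: "T \<ge> 1" and p: "\<forall>k. p k > 0" and q: "\<forall>l. q l > 0"
  shows "(INF \<tau>\<in>behav2 T. gamma T p q M \<sigma> \<tau>) \<le> v"
proof -
  obtain \<tau> where \<tau>: "\<tau> \<in> behav2 T" and agree: "\<forall>l hA hB b. length hA = length hB \<longrightarrow> length hA < T \<longrightarrow>
      plan_of_behav2 q \<tau> l hA hB b = ys l hA hB b"
    using exists_behav2_realizing[of T q ys] S q by (auto simp: saddle_point_def)
  have "(INF \<tau>'\<in>behav2 T. gamma T p q M \<sigma> \<tau>') \<le> gamma T p q M \<sigma> \<tau>"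
    by (rule cINF_lower[OF gamma_bdd_below[OF \<sigma> T p q] \<tau>])
  also have "\<dots> = plan_payoff T M (plan_of_behav p \<sigma>) ys"
    unfolding gamma_eq_plan_payoff[OF \<sigma> \<tau>] by (rule plan_payoff_cong) (simp_all add: agree)
  also have "\<dots> \<le> v"
    using S realX_plan_of_behav[OF \<sigma> p T] by (simp add: saddle_point_def)
  finally show ?thesis .
qed

lemma INF_gamma_eq_saddle_value:
  fixes M :: "'k::finite \<Rightarrow> 'l::finite \<Rightarrow> 'a::finite \<Rightarrow> 'b::finite \<Rightarrow> real"
  assumes S: "saddle_point T p q M xs ys v" and \<sigma>: "\<sigma> \<in> behav1 T"
    and T: "T \<ge> 1" and p: "\<forall>k. p k > 0" and q: "\<forall>l. q l > 0"
    and guarantee: "\<forall>\<tau>\<in>behav2 T. v \<le> gamma T p q M \<sigma> \<tau>"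
  shows "(INF \<tau>\<in>behav2 T. gamma T p q M \<sigma> \<tau>) = v"
proof (rule antisym)
  show "(INF \<tau>\<in>behav2 T. gamma T p q M \<sigma> \<tau>) \<le> v"
    by (rule INF_gamma_le_saddle_value[OF S \<sigma> T p q])
  have "(behav2 T :: (nat \<Rightarrow> 'l \<Rightarrow> 'a list \<Rightarrow> 'b list \<Rightarrow> 'b \<Rightarrow> real) set) \<noteq> {}"
    using exists_behav2_realizing[of T q ys] S q unfolding saddle_point_def by blast
  then show "v \<le> (INF \<tau>\<in>behav2 T. gamma T p q M \<sigma> \<tau>)"
    using guarantee by (intro cINF_greatest) auto
qed

lemma val_maxmin_eq_saddle_value:
  fixes M :: "'k::finite \<Rightarrow> 'l::finite \<Rightarrow> 'a::finite \<Rightarrow> 'b::finite \<Rightarrow> real"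
  assumes S: "saddle_point T p q M xs ys v" and T: "T \<ge> 1" and p: "\<forall>k. p k > 0" and q: "\<forall>l. q l > 0"
  shows "val_maxmin T p q M = v"
proof -
  let ?\<sigma> = "behav_of_plan p xs"
  have X: "realX T p xs"
    using S by (simp add: saddle_point_def)
  have "?\<sigma> \<in> behav1 T" "\<forall>\<tau>\<in>behav2 T. v \<le> gamma T p q M ?\<sigma> \<tau>"
    using behav_of_plan_behav1[OF X p] gamma_induced_guarantee[OF X behav_of_plan_induced _ T p q] S
    by (simp_all add: saddle_point_def)
  then show ?thesis
    unfolding val_maxmin_def
    using INF_gamma_eq_saddle_value[OF S _ T p q] INF_gamma_le_saddle_value[OF S _ T p q]
    by (intro cSup_eq_maximum) auto
qed

lemma lp1_characterization:
  fixes M :: "'k::finite \<Rightarrow> 'l::finite \<Rightarrow> 'a::finite \<Rightarrow> 'b::finite \<Rightarrow> real"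
  assumes S: "saddle_point T p q M xs ys v" and T: "T \<ge> 1" and p: "\<forall>k. p k > 0" and q: "\<forall>l. q l > 0"
  shows "\<exists>x u0 u. lp1_feasible T p M x u0 u \<and> lp1_obj q u0 = v"
    and "lp1_feasible T p M x u0 u \<Longrightarrow> lp1_obj q u0 \<le> v"
    and "lp1_feasible T p M x u0 u \<Longrightarrow> v \<le> lp1_obj q u0 \<Longrightarrow> \<sigma> \<in> behav1 T \<Longrightarrow> induced1 T p x \<sigma>
      \<Longrightarrow> security1 T p q M \<sigma>"
proof -
  have X: "realX T p xs" and Y: "realY T q ys"
    and lower: "\<forall>y. realY T q y \<longrightarrow> v \<le> plan_payoff T M xs y"
    and upper: "\<forall>x. realX T p x \<longrightarrow> plan_payoff T M x ys \<le> v"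
    using S by (simp_all add: saddle_point_def)
  show bound: "lp1_obj q u0 \<le> v" if "lp1_feasible T p M x u0 u" for x u0 u
    using lp1_weak_duality[OF that Y T] upper that by (force simp: lp1_feasible_def)
  obtain y c c' where "y \<in> pure_plans2 T q" "lp1_feasible T p M xs c c'"
    and "lp1_obj q c = plan_payoff T M xs y"
    using lp1_attained_by_pure_reply[OF X T q, of M] by blast
  then show "\<exists>x u0 u. lp1_feasible T p M x u0 u \<and> lp1_obj q u0 = v"
    using lower bound[of xs c c'] by (force simp: pure_plans2_def)
  assume F: "lp1_feasible T p M x u0 u" and opt: "v \<le> lp1_obj q u0"
    and \<sigma>: "\<sigma> \<in> behav1 T" and I: "induced1 T p x \<sigma>"
  have "realX T p x"
    using F by (simp add: lp1_feasible_def)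
  moreover have "\<forall>y. realY T q y \<longrightarrow> v \<le> plan_payoff T M x y"
    using lp1_weak_duality[OF F _ T] opt by force
  ultimately have "\<forall>\<tau>\<in>behav2 T. v \<le> gamma T p q M \<sigma> \<tau>"
    using gamma_induced_guarantee[OF _ I \<sigma> T p q] by blast
  then show "security1 T p q M \<sigma>"
    using INF_gamma_eq_saddle_value[OF S \<sigma> T p q] val_maxmin_eq_saddle_value[OF S T p q] \<sigma>
    by (simp add: security1_def)
qed

definition swap_mult :: "('i \<Rightarrow> 'x \<Rightarrow> 'y \<Rightarrow> 'a \<Rightarrow> 'b \<Rightarrow> real) \<Rightarrow> 'i \<Rightarrow> 'y \<Rightarrow> 'x \<Rightarrow> 'b \<Rightarrow> 'a \<Rightarrow> real" where
  "swap_mult w i hB hA b a = - w i hA hB a b"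

lemma swap_mult_swap_mult [simp]: "swap_mult (swap_mult w) = w"
  by (simp add: swap_mult_def fun_eq_iff)

lemma conv0_swap_mult:
  "length hA = length hB \<Longrightarrow> conv0 T (swap_mult w) k hB hA b a = - conv0 T w k hA hB a b"
  by (simp add: conv0_def swap_mult_def)

lemma neg_le_neg_minus_iff: "(- a \<le> - b - c) = (b + c \<le> (a :: real))"
  by linarith

lemma all_hist_pairs_swap:
  "(\<forall>k hA hB. length hA = length hB \<and> Suc (length hA) < T \<longrightarrow> (\<forall>a b c. P k hA hB a b c)) \<longleftrightarrow>
   (\<forall>k hB hA. length hB = length hA \<and> Suc (length hB) < T \<longrightarrow> (\<forall>b a c. P k hA hB a b c))"
  by auto

lemma lp2_feasible_iff_dual:
  "lp2_feasible T q M y w0 w \<longleftrightarrow>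
     lp1_feasible T q (dual_game M) (swap_hist y) (\<lambda>k. - w0 k) (swap_mult w)"
  unfolding lp2_feasible_def lp1_feasible_def realX_swap_hist
  by (simp add: dual_game_def swap_hist_def conv0_swap_mult sum_negf neg_le_neg_minus_iff)
    (subst all_hist_pairs_swap, rule refl)

lemma lp2_obj_dual: "lp2_obj p w0 = - lp1_obj p (\<lambda>k. - w0 k)"
  by (simp add: lp1_obj_def lp2_obj_def sum_negf)

lemma lp2_characterization:
  fixes M :: "'k::finite \<Rightarrow> 'l::finite \<Rightarrow> 'a::finite \<Rightarrow> 'b::finite \<Rightarrow> real"
  assumes S: "saddle_point T p q M xs ys v" and T: "T \<ge> 1" and p: "\<forall>k. p k > 0" and q: "\<forall>l. q l > 0"
  shows "val_minmax T p q M = v"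
    and "\<exists>y w0 w. lp2_feasible T q M y w0 w \<and> lp2_obj p w0 = v"
    and "lp2_feasible T q M y w0 w \<Longrightarrow> v \<le> lp2_obj p w0"
    and "lp2_feasible T q M y w0 w \<Longrightarrow> lp2_obj p w0 \<le> v \<Longrightarrow> \<tau> \<in> behav2 T \<Longrightarrow> induced2 T q y \<tau>
      \<Longrightarrow> security2 T p q M \<tau>"
proof -
  note D = saddle_point_dual[OF S]
  show "val_minmax T p q M = v"
    using val_maxmin_eq_saddle_value[OF D T q p] by (simp add: val_minmax_dual)
  obtain x c c' where "lp1_feasible T q (dual_game M) x c c'" "lp1_obj p c = - v"
    using lp1_characterization(1)[OF D T q p] by blast
  then show "\<exists>y w0 w. lp2_feasible T q M y w0 w \<and> lp2_obj p w0 = v"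
    by (intro exI[of _ "swap_hist x"] exI[of _ "\<lambda>k. - c k"] exI[of _ "swap_mult c'"])
      (simp add: lp2_feasible_iff_dual lp2_obj_dual)
  show "v \<le> lp2_obj p w0" if "lp2_feasible T q M y w0 w"
    using lp1_characterization(2)[OF D T q p] that by (force simp: lp2_feasible_iff_dual lp2_obj_dual)
  show "security2 T p q M \<tau>"
    if "lp2_feasible T q M y w0 w" "lp2_obj p w0 \<le> v" "\<tau> \<in> behav2 T" "induced2 T q y \<tau>"
    using lp1_characterization(3)[OF D T q p] that
    by (simp add: lp2_feasible_iff_dual lp2_obj_dual behav2_iff_swap induced2_iff_swap security2_iff_dual)
qed

theorem theorem1:
  fixes T :: nat
    and p :: "'k::finite \<Rightarrow> real" and q :: "'l::finite \<Rightarrow> real"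
    and M :: "'k \<Rightarrow> 'l \<Rightarrow> 'a::finite \<Rightarrow> 'b::finite \<Rightarrow> real"
  assumes "T \<ge> 1"
    and "\<forall>k. p k > 0" and "sum p UNIV = 1"
    and "\<forall>l. q l > 0" and "sum q UNIV = 1"
  shows
   "(\<exists>x u0 u. lp1_feasible T p M x u0 u \<and> lp1_obj q u0 = val_maxmin T p q M) \<and>
    (\<forall>x u0 u. lp1_feasible T p M x u0 u \<longrightarrow> lp1_obj q u0 \<le> val_maxmin T p q M) \<and>
    (\<forall>x u0 u. lp1_feasible T p M x u0 u \<and>
        (\<forall>x' u0' u'. lp1_feasible T p M x' u0' u' \<longrightarrow> lp1_obj q u0' \<le> lp1_obj q u0) \<longrightarrow>
        (\<forall>\<sigma>\<in>behav1 T. induced1 T p x \<sigma> \<longrightarrow> security1 T p q M \<sigma>)) \<and>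
    (\<exists>y w0 w. lp2_feasible T q M y w0 w \<and> lp2_obj p w0 = val_maxmin T p q M) \<and>
    (\<forall>y w0 w. lp2_feasible T q M y w0 w \<longrightarrow> lp2_obj p w0 \<ge> val_maxmin T p q M) \<and>
    (\<forall>y w0 w. lp2_feasible T q M y w0 w \<and>
        (\<forall>y' w0' w'. lp2_feasible T q M y' w0' w' \<longrightarrow> lp2_obj p w0 \<le> lp2_obj p w0') \<longrightarrow>
        (\<forall>\<tau>\<in>behav2 T. induced2 T q y \<tau> \<longrightarrow> security2 T p q M \<tau>))"
proof -
  obtain xs ys v where S: "saddle_point T p q M xs ys v"
    using plan_game_saddle_point assms by blast
  note P1 = lp1_characterization[OF S assms(1,2,4)]
  note P2 = lp2_characterization[OF S assms(1,2,4)]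
  have "val_maxmin T p q M = v"
    by (rule val_maxmin_eq_saddle_value[OF S assms(1,2,4)])
  moreover have "v \<le> lp1_obj q u0"
    if "\<forall>x' u0' u'. lp1_feasible T p M x' u0' u' \<longrightarrow> lp1_obj q u0' \<le> lp1_obj q u0" for u0
    using P1(1) that by force
  moreover have "lp2_obj p w0 \<le> v"
    if "\<forall>y' w0' w'. lp2_feasible T q M y' w0' w' \<longrightarrow> lp2_obj p w0 \<le> lp2_obj p w0'" for w0
    using P2(2) that by force
  ultimately show ?thesis
    using P1(1,2,3) P2(2,3,4) by blast
qed

end
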